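(* Let $\Gamma$ be a group. In the category $\mathrm{Cr}\Gamma$ of crossed $\Gamma$-modules: (a) For every surjective morphism $f:(G',\mu')\to(G,\mu)$ and every morphism $h:F_{(L,\nu)}\to(G,\mu)$ from a free crossed $\Gamma$-module, there is a morphism $h':F_{(L,\nu)}\to(G',\mu')$ with $fh'=h$; consequently $\mathfrak P_\Gamma$ (retracts of free crossed $\Gamma$-modules), together with surjective morphisms, is a projective class in $\mathrm{Cr}\Gamma$. (b) For every surjective morphism $f:(G',\mu')\to(G,\mu)$ admitting a $\Gamma$-equivariant set-theoretic section and every morphism $h:F_{\Gamma(L,\nu)}\to(G,\mu)$ from a $\Gamma$-equivariant free crossed $\Gamma$-module, there is a morphism $h'$ with $fh'=h$; consequently $\mathfrak P_{\Gamma-e}$ (retracts of $\Gamma$-equivariant free crossed $\Gamma$-modules), together with surjective morphisms admitting $\Gamma$-equivariant set-theoretic sections, is a projective class in $\mathrm{Cr}\Gamma$.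
   Context: A crossed $\Gamma$-module $(G,\mu)$ is a group $G$ with an action of $\Gamma$ by automorphisms and a homomorphism $\mu:G\to\Gamma$ with $\mu({}^{\gamma}g)=\gamma\mu(g)\gamma^{-1}$ and ${}^{\mu(g)}g'=gg'g^{-1}$. Morphisms $(G,\mu)\to(G',\mu')$ are $\Gamma$-equivariant homomorphisms $f$ with $\mu'f=\mu$. Free crossed $\Gamma$-module on $(G,\mu)$: let $F(\Gamma\times G)$ be the free group on pairs $(\gamma,g)$ with $\Gamma$-action ${}^{\gamma'}(\gamma,g)=(\gamma'\gamma,g)$ and $\eta:F(\Gamma\times G)\to G$, $\eta(\gamma,g)={}^{\gamma}g$; $F_{(G,\mu)}$ is the quotient of $F(\Gamma\times G)$ by the normal subgroup generated by the Peiffer elements ${}^{\mu\eta(x)}x'\cdot x x'^{-1}x^{-1}$, with the crossed module map induced by $\mu\eta$; the canonical map $F_{(G,\mu)}\to(G,\mu)$ is surjective. $\Gamma$-equivariant free crossed $\Gamma$-module on $(G,\mu)$: let $F(G)$ be the free group on symbols $|g|$ with ${}^{\gamma}|g|=|{}^{\gamma}g|$, $\varphi:F(G)\to G$, $|g|\mapsto g$; $F_{\Gamma(G,\mu)}$ is the quotient of $F(G)$ by the normal subgroup generated by ${}^{\mu\varphi(x)}x'\cdot xx'^{-1}x^{-1}$, with crossed module map induced by $\mu\varphi$; the canonical surjection to $(G,\mu)$ has the $\Gamma$-equivariant section $g\mapsto[|g|]$. A projective class (in the sense of Eilenberg–Moore) is a class of objects $\mathfrak P$ together with a class of "$\mathfrak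 P$-epimorphisms" such that each object of $\mathfrak P$ has the lifting property against all $\mathfrak P$-epimorphisms, $\mathfrak P$ is closed under retracts, and every object receives a $\mathfrak P$-epimorphism from an object of $\mathfrak P$. *)

theory Defs
  imports "HOL-Algebra.Algebra"
begin

record ('a, 'g) xmod =
  xgrp :: "'a monoid"
  xact :: "'g \<Rightarrow> 'a \<Rightarrow> 'a"
  xmu  :: "'a \<Rightarrow> 'g"

definition crossed_module :: "'g monoid \<Rightarrow> ('a, 'g) xmod \<Rightarrow> bool" where
  "crossed_module \<Gamma> M \<longleftrightarrow>
     group (xgrp M) \<and>
     (\<forall>\<gamma>\<in>carrier \<Gamma>. xact M \<gamma> \<in> hom (xgrp M) (xgrp M)) \<and>
     (\<forall>x\<in>carrier (xgrp M). xact M \<one>\<^bsub>\<Gamma>\<^esub> x = x) \<and>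
     (\<forall>\<gamma>\<in>carrier \<Gamma>. \<forall>\<delta>\<in>carrier \<Gamma>. \<forall>x\<in>carrier (xgrp M).
        xact M (\<gamma> \<otimes>\<^bsub>\<Gamma>\<^esub> \<delta>) x = xact M \<gamma> (xact M \<delta> x)) \<and>
     xmu M \<in> hom (xgrp M) \<Gamma> \<and>
     (\<forall>\<gamma>\<in>carrier \<Gamma>. \<forall>x\<in>carrier (xgrp M).
        xmu M (xact M \<gamma> x) = \<gamma> \<otimes>\<^bsub>\<Gamma>\<^esub> xmu M x \<otimes>\<^bsub>\<Gamma>\<^esub> inv\<^bsub>\<Gamma>\<^esub> \<gamma>) \<and>
     (\<forall>x\<in>carrier (xgrp M). \<forall>y\<in>carrier (xgrp M).
        xact M (xmu M x) y = x \<otimes>\<^bsub>xgrp M\<^esub> y \<otimes>\<^bsub>xgrp M\<^esub> inv\<^bsub>xgrp M\<^esub> x)"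

text \<open>Morphisms of crossed Gamma-modules (functions considered on the carrier only).\<close>
definition xmod_hom :: "'g monoid \<Rightarrow> ('a, 'g) xmod \<Rightarrow> ('b, 'g) xmod \<Rightarrow> ('a \<Rightarrow> 'b) \<Rightarrow> bool" where
  "xmod_hom \<Gamma> M Y f \<longleftrightarrow>
     f \<in> hom (xgrp M) (xgrp Y) \<and>
     (\<forall>\<gamma>\<in>carrier \<Gamma>. \<forall>x\<in>carrier (xgrp M). f (xact M \<gamma> x) = xact Y \<gamma> (f x)) \<and>
     (\<forall>x\<in>carrier (xgrp M). xmu Y (f x) = xmu M x)"

definition xmod_surj :: "'g monoid \<Rightarrow> ('a, 'g) xmod \<Rightarrow> ('b, 'g) xmod \<Rightarrow> ('a \<Rightarrow> 'b) \<Rightarrow> bool" where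
  "xmod_surj \<Gamma> M Y f \<longleftrightarrow> xmod_hom \<Gamma> M Y f \<and> f ` carrier (xgrp M) = carrier (xgrp Y)"

definition xmod_eq_split :: "'g monoid \<Rightarrow> ('a, 'g) xmod \<Rightarrow> ('b, 'g) xmod \<Rightarrow> ('a \<Rightarrow> 'b) \<Rightarrow> bool" where
  "xmod_eq_split \<Gamma> M Y f \<longleftrightarrow> xmod_surj \<Gamma> M Y f \<and>
     (\<exists>s. s \<in> carrier (xgrp Y) \<rightarrow> carrier (xgrp M) \<and>
          (\<forall>y\<in>carrier (xgrp Y). f (s y) = y) \<and>
          (\<forall>\<gamma>\<in>carrier \<Gamma>. \<forall>y\<in>carrier (xgrp Y). s (xact Y \<gamma> y) = xact M \<gamma> (s y)))"

definition xmod_retract :: "'g monoid \<Rightarrow> ('a, 'g) xmod \<Rightarrow> ('b, 'g) xmod \<Rightarrow> bool" where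
  "xmod_retract \<Gamma> R Q \<longleftrightarrow>
     (\<exists>i r. xmod_hom \<Gamma> R Q i \<and> xmod_hom \<Gamma> Q R r \<and> (\<forall>x\<in>carrier (xgrp R). r (i x) = x))"

definition xmod_lifts :: "'g monoid \<Rightarrow> ('q, 'g) xmod \<Rightarrow> ('b, 'g) xmod \<Rightarrow> ('a, 'g) xmod \<Rightarrow> ('b \<Rightarrow> 'a) \<Rightarrow> bool" where
  "xmod_lifts \<Gamma> Q M' M f \<longleftrightarrow>
     (\<forall>h. xmod_hom \<Gamma> Q M h \<longrightarrow>
        (\<exists>h'. xmod_hom \<Gamma> Q M' h' \<and> (\<forall>x\<in>carrier (xgrp Q). f (h' x) = h x)))"

type_synonym 'x word = "('x \<times> bool) list"
  \<comment> \<open>a letter (x, False) is the generator x, (x, True) is its inverse\<close>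

definition reduced_word :: "'x word \<Rightarrow> bool" where
  "reduced_word w \<longleftrightarrow> (\<forall>i. Suc i < length w \<longrightarrow>
      \<not> (fst (w ! i) = fst (w ! Suc i) \<and> snd (w ! i) \<noteq> snd (w ! Suc i)))"

fun red_acc :: "'x word \<Rightarrow> 'x word \<Rightarrow> 'x word" where
  "red_acc acc [] = rev acc"
| "red_acc [] (b # bs) = red_acc [b] bs"
| "red_acc (a # acc) (b # bs) =
     (if fst a = fst b \<and> snd a \<noteq> snd b then red_acc acc bs else red_acc (b # a # acc) bs)"

definition reduce_word :: "'x word \<Rightarrow> 'x word" where
  "reduce_word w = red_acc [] w"

definition free_grp :: "'x set \<Rightarrow> 'x word monoid" where
  "free_grp S = \<lparr>carrier = {w. fst ` set w \<subseteq> S \<and> reduced_word w},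
                 monoid.mult = (\<lambda>u v. reduce_word (u @ v)), monoid.one = []\<rparr>"

definition eval_word :: "('a, 'b) monoid_scheme \<Rightarrow> ('x \<Rightarrow> 'a) \<Rightarrow> 'x word \<Rightarrow> 'a" where
  "eval_word G e w = foldr (\<lambda>(x, b) acc. (if b then inv\<^bsub>G\<^esub> (e x) else e x) \<otimes>\<^bsub>G\<^esub> acc) w \<one>\<^bsub>G\<^esub>"

definition normal_closure :: "('a, 'b) monoid_scheme \<Rightarrow> 'a set \<Rightarrow> 'a set" where
  "normal_closure G S = \<Inter> {N. N \<lhd> G \<and> S \<subseteq> N}"

text \<open>Generic construction: free group on generators S with a Gamma-action \<alpha>
  on generators and a Gamma-equivariant map e of generators into M;
  quotient by the normal subgroup generated by the Peiffer elements.\<close>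
definition peiffer_quot ::
  "'g monoid \<Rightarrow> ('a, 'g) xmod \<Rightarrow> 'x set \<Rightarrow> ('g \<Rightarrow> 'x \<Rightarrow> 'x) \<Rightarrow> ('x \<Rightarrow> 'a) \<Rightarrow> ('x word set, 'g) xmod" where
  "peiffer_quot \<Gamma> M S \<alpha> e =
    (let Fr = free_grp S;
         act = (\<lambda>\<gamma> w. map (\<lambda>(x, b). (\<alpha> \<gamma> x, b)) w);
         m = (\<lambda>w. xmu M (eval_word (xgrp M) e w));
         P = {act (m x) x' \<otimes>\<^bsub>Fr\<^esub> x \<otimes>\<^bsub>Fr\<^esub> inv\<^bsub>Fr\<^esub> x' \<otimes>\<^bsub>Fr\<^esub> inv\<^bsub>Fr\<^esub> x
               | x x'. x \<in> carrier Fr \<and> x' \<in> carrier Fr};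
         N = normal_closure Fr P
     in \<lparr>xgrp = Fr Mod N, xact = (\<lambda>\<gamma> C. act \<gamma> ` C), xmu = (\<lambda>C. m (SOME w. w \<in> C))\<rparr>)"

definition free_xmod :: "'g monoid \<Rightarrow> ('a, 'g) xmod \<Rightarrow> (('g \<times> 'a) word set, 'g) xmod" where
  "free_xmod \<Gamma> M = peiffer_quot \<Gamma> M (carrier \<Gamma> \<times> carrier (xgrp M))
      (\<lambda>\<gamma>' (\<gamma>, g). (\<gamma>' \<otimes>\<^bsub>\<Gamma>\<^esub> \<gamma>, g)) (\<lambda>(\<gamma>, g). xact M \<gamma> g)"

text \<open>Gamma-equivariant free crossed Gamma-module F_\<Gamma>(G,\<mu>) on symbols |g|.\<close>
definition eq_free_xmod :: "'g monoid \<Rightarrow> ('a, 'g) xmod \<Rightarrow> ('a word set, 'g) xmod" where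
  "eq_free_xmod \<Gamma> M = peiffer_quot \<Gamma> M (carrier (xgrp M)) (xact M) (\<lambda>g. g)"

text \<open>Retracts of free crossed Gamma-modules F_(L,\<nu>), with L of type 'l.\<close>
definition in_PG :: "'l itself \<Rightarrow> 'g monoid \<Rightarrow> ('q, 'g) xmod \<Rightarrow> bool" where
  "in_PG _ \<Gamma> Q \<longleftrightarrow> crossed_module \<Gamma> Q \<and>
     (\<exists>L :: ('l, 'g) xmod. crossed_module \<Gamma> L \<and> xmod_retract \<Gamma> Q (free_xmod \<Gamma> L))"

definition in_PGe :: "'l itself \<Rightarrow> 'g monoid \<Rightarrow> ('q, 'g) xmod \<Rightarrow> bool" where
  "in_PGe _ \<Gamma> Q \<longleftrightarrow> crossed_module \<Gamma> Q \<and>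
     (\<exists>L :: ('l, 'g) xmod. crossed_module \<Gamma> L \<and> xmod_retract \<Gamma> Q (eq_free_xmod \<Gamma> L))"

end

theory Submission
  imports Defs
begin

text \<open>A morphism out of a Peiffer quotient of a free group is given by a \<open>\<Gamma>\<close>-equivariant
  assignment of values to the generators that is compatible with the boundaries: evaluating words
  then automatically kills the Peiffer elements, since in the target the action of a boundary is
  conjugation. So to lift \<open>h : F \<rightarrow> M\<close> along \<open>f : M' \<rightarrow> M\<close> it suffices to choose equivariant
  preimages in \<open>M'\<close> of the images of the generators. For \<open>F(L,\<nu>)\<close> the generators
  \<open>(\<gamma>, g)\<close> form free \<open>\<Gamma>\<close>-orbits, so a preimage of the image of \<open>(1, g)\<close> can be chosen arbitrarily
  and moved by \<open>\<gamma>\<close>: surjectivity of \<open>f\<close> suffices. For \<open>F\<^sub>\<Gamma>(L,\<nu>)\<close> the generators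
  \<open>|g|\<close> carry the action of \<open>L\<close>, and an equivariant section of \<open>f\<close> provides equivariant preimages.
  Lifting properties pass to retracts, and the canonical maps \<open>F \<rightarrow> M\<close> (the equivariant one split by
  \<open>g \<mapsto> [|g|]\<close>) are epimorphisms of the required kind onto any \<open>M\<close>.\<close>

section \<open>Free groups on reduced words\<close>

definition inv_letter :: "'x \<times> bool \<Rightarrow> 'x \<times> bool" where
  "inv_letter a = (fst a, \<not> snd a)"

lemma inv_letter_inv_letter [simp]: "inv_letter (inv_letter a) = a"
  by (cases a) (simp add: inv_letter_def)

lemma fst_inv_letter [simp]: "fst (inv_letter a) = fst a"
  and snd_inv_letter [simp]: "snd (inv_letter a) = (\<not> snd a)"
  by (simp_all add: inv_letter_def)

lemma cancelling_letters_iff: "(fst a = fst b \<and> snd a \<noteq> snd b) \<longleftrightarrow> b = inv_letter a"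
  by (cases a; cases b) (auto simp: inv_letter_def)

lemma cancelling_letters_simps [simp]:
  "(fst a = fst b \<and> snd a = (\<not> snd b)) \<longleftrightarrow> b = inv_letter a"
  "(fst a = fst b \<longrightarrow> snd a = snd b) \<longleftrightarrow> b \<noteq> inv_letter a"
  by (cases a; cases b; auto simp: inv_letter_def)+

lemma reduced_word_iff_no_cancellation:
  "reduced_word w \<longleftrightarrow> \<not> (\<exists>xs a ys. w = xs @ a # inv_letter a # ys)"
proof
  assume red: "reduced_word w"
  show "\<not> (\<exists>xs a ys. w = xs @ a # inv_letter a # ys)"
  proof
    assume "\<exists>xs a ys. w = xs @ a # inv_letter a # ys"
    then obtain xs a ys where w: "w = xs @ a # inv_letter a # ys" by blast
    have "Suc (length xs) < length w" using w by simp
    moreover have "w ! length xs = a" "w ! Suc (length xs) = inv_letter a"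
      using w by (simp_all add: nth_append)
    ultimately show False using red unfolding reduced_word_def by (metis cancelling_letters_iff)
  qed
next
  assume no_cancel: "\<not> (\<exists>xs a ys. w = xs @ a # inv_letter a # ys)"
  show "reduced_word w"
  proof (unfold reduced_word_def, intro allI impI notI)
    fix i assume i: "Suc i < length w"
      and c: "fst (w ! i) = fst (w ! Suc i) \<and> snd (w ! i) \<noteq> snd (w ! Suc i)"
    have "w = take i w @ w ! i # w ! Suc i # drop (Suc (Suc i)) w"
      using i by (metis Cons_nth_drop_Suc Suc_lessD append_take_drop_id)
    moreover have "w ! Suc i = inv_letter (w ! i)" using c cancelling_letters_iff by blast
    ultimately show False using no_cancel by metis
  qed
qed

lemma reduced_word_appendD: "reduced_word (xs @ ys) \<Longrightarrow> reduced_word xs \<and> reduced_word ys"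
  unfolding reduced_word_iff_no_cancellation by (metis append.assoc append_Cons)

lemma reduced_word_Nil [simp]: "reduced_word []"
  and reduced_word_singleton [simp]: "reduced_word [a]"
  unfolding reduced_word_iff_no_cancellation by (auto simp: append_eq_Cons_conv Cons_eq_append_conv)

lemma reduced_word_snoc:
  assumes "reduced_word (zs @ [a])" "b \<noteq> inv_letter a"
  shows "reduced_word (zs @ [a, b])"
proof (unfold reduced_word_iff_no_cancellation, rule notI)
  assume "\<exists>xs c ys. zs @ [a, b] = xs @ c # inv_letter c # ys"
  then obtain xs c ys where e: "zs @ [a, b] = xs @ c # inv_letter c # ys" by blast
  hence e': "b # a # rev zs = rev ys @ inv_letter c # c # rev xs"
    by (metis rev.simps append.assoc append_Cons append_Nil rev_append)
  show False
  proof (cases "rev ys")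
    case Nil
    then show ?thesis using e' assms(2) by simp
  next
    case (Cons y r)
    then have "rev (a # rev zs) = rev (r @ inv_letter c # c # rev xs)" using e' by simp
    hence "zs @ [a] = xs @ c # inv_letter c # rev r" by simp
    then show ?thesis using assms(1) unfolding reduced_word_iff_no_cancellation by blast
  qed
qed

definition cancel_step :: "'x word \<Rightarrow> 'x word \<Rightarrow> bool" where
  "cancel_step u v \<longleftrightarrow> (\<exists>xs a ys. u = xs @ a # inv_letter a # ys \<and> v = xs @ ys)"

abbreviation cancel_steps :: "'x word \<Rightarrow> 'x word \<Rightarrow> bool" where
  "cancel_steps \<equiv> cancel_step\<^sup>*\<^sup>*"

text \<open>The accumulator of \<^const>\<open>red_acc\<close> holds the already reduced prefix in reverse order.\<close>

lemma red_acc_append: "red_acc acc (xs @ ys) = red_acc (rev (red_acc acc xs)) ys"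
  by (induction acc xs rule: red_acc.induct) auto

lemma red_acc_reduced: "reduced_word (rev acc @ w) \<Longrightarrow> red_acc acc w = rev acc @ w"
proof (induction acc w rule: red_acc.induct)
  case (3 a acc b bs)
  have "b \<noteq> inv_letter a"
    using "3.prems" unfolding reduced_word_iff_no_cancellation
    by (metis append_Cons append_Nil append.assoc rev.simps(2))
  hence keep: "\<not> (fst a = fst b \<and> snd a \<noteq> snd b)" by (simp add: cancelling_letters_iff)
  then show ?case using "3.IH"(2)[OF keep] "3.prems" by simp
qed auto

lemma red_acc_cancel_steps: "cancel_steps (rev acc @ w) (red_acc acc w)"
proof (induction acc w rule: red_acc.induct)
  case (3 a acc b bs)
  show ?case
  proof (cases "fst a = fst b \<and> snd a \<noteq> snd b")
    case True
    hence b: "b = inv_letter a" by (simp add: cancelling_letters_iff)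
    have "cancel_step (rev (a # acc) @ b # bs) (rev acc @ bs)"
      unfolding cancel_step_def b by (rule exI[of _ "rev acc"]) auto
    then show ?thesis using "3.IH"(1)[OF True] True by simp
  next
    case False
    then show ?thesis using "3.IH"(2)[OF False] by simp
  qed
qed auto

lemma reduced_word_red_acc: "reduced_word (rev acc) \<Longrightarrow> reduced_word (red_acc acc w)"
proof (induction acc w rule: red_acc.induct)
  case (3 a acc b bs)
  show ?case
  proof (cases "fst a = fst b \<and> snd a \<noteq> snd b")
    case True
    have "reduced_word (rev acc)" using "3.prems" reduced_word_appendD by (metis rev.simps(2))
    then show ?thesis using "3.IH"(1)[OF True] True by simp
  next
    case False
    hence "b \<noteq> inv_letter a" by (simp add: cancelling_letters_iff)
    hence "reduced_word (rev acc @ [a, b])" using reduced_word_snoc "3.prems" by (metis rev.simps(2))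
    then show ?thesis using "3.IH"(2)[OF False] False by simp
  qed
qed auto

lemma set_red_acc: "set (red_acc acc w) \<subseteq> set acc \<union> set w"
  by (induction acc w rule: red_acc.induct) auto

lemma red_acc_cancel:
  assumes "reduced_word (rev acc)"
  shows "red_acc acc (a # inv_letter a # ys) = red_acc acc ys"
proof (cases acc)
  case Nil
  then show ?thesis by (simp add: cancelling_letters_iff)
next
  case (Cons b rest)
  show ?thesis
  proof (cases "a = inv_letter b")
    case True
    show ?thesis
    proof (cases rest)
      case Nil
      then show ?thesis using Cons True by (simp add: cancelling_letters_iff)
    next
      case (Cons c r)
      have "b \<noteq> inv_letter c"
      proof
        assume "b = inv_letter c"
        hence "rev acc = rev r @ c # inv_letter c # []" using Cons \<open>acc = b # rest\<close> by simp
        thus False using assms unfolding reduced_word_iff_no_cancellation by blast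
      qed
      then show ?thesis using Cons \<open>acc = b # rest\<close> True by (simp add: cancelling_letters_iff)
    qed
  next
    case False
    hence "\<not> (fst b = fst a \<and> snd b \<noteq> snd a)" by (metis cancelling_letters_iff)
    then show ?thesis using Cons by (simp add: cancelling_letters_iff)
  qed
qed

lemma reduce_word_cancel_step: "cancel_step u v \<Longrightarrow> reduce_word u = reduce_word v"
proof -
  assume "cancel_step u v"
  then obtain xs a ys where u: "u = xs @ a # inv_letter a # ys" and v: "v = xs @ ys"
    unfolding cancel_step_def by blast
  have "reduced_word (rev (rev (red_acc [] xs)))" by (simp add: reduced_word_red_acc)
  then show ?thesis
    unfolding reduce_word_def u v red_acc_append[of _ xs] by (simp only: red_acc_cancel)
qed

lemma reduce_word_cancel_steps: "cancel_steps u v \<Longrightarrow> reduce_word u = reduce_word v"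
  by (induction rule: rtranclp_induct) (auto dest: reduce_word_cancel_step)

lemma reduce_word_reduced: "reduced_word w \<Longrightarrow> reduce_word w = w"
  unfolding reduce_word_def using red_acc_reduced[of "[]" w] by simp

lemma cancel_steps_reduce_word: "cancel_steps w (reduce_word w)"
  unfolding reduce_word_def using red_acc_cancel_steps[of "[]" w] by simp

lemma reduce_word_unique: "cancel_steps u v \<Longrightarrow> reduced_word v \<Longrightarrow> reduce_word u = v"
  using reduce_word_cancel_steps reduce_word_reduced by metis

lemma reduced_word_reduce_word: "reduced_word (reduce_word w)"
  unfolding reduce_word_def by (rule reduced_word_red_acc) simp

lemma set_reduce_word: "set (reduce_word w) \<subseteq> set w"
  unfolding reduce_word_def using set_red_acc[of "[]" w] by simp

lemma cancel_step_context: "cancel_step u v \<Longrightarrow> cancel_step (p @ u @ q) (p @ v @ q)"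
  unfolding cancel_step_def by (metis append.assoc append_Cons)

lemma cancel_steps_context: "cancel_steps u v \<Longrightarrow> cancel_steps (p @ u @ q) (p @ v @ q)"
  by (induction rule: rtranclp_induct) (auto intro: rtranclp.rtrancl_into_rtrancl cancel_step_context)

lemma reduce_word_append_left: "reduce_word (reduce_word u @ v) = reduce_word (u @ v)"
  using reduce_word_cancel_steps[OF cancel_steps_context[OF cancel_steps_reduce_word, of "[]" u v]]
  by simp

lemma reduce_word_append_right: "reduce_word (u @ reduce_word v) = reduce_word (u @ v)"
  using reduce_word_cancel_steps[OF cancel_steps_context[OF cancel_steps_reduce_word, of u v "[]"]]
  by simp

definition inv_word :: "'x word \<Rightarrow> 'x word" where
  "inv_word w = rev (map inv_letter w)"

lemma cancel_steps_inv_word: "cancel_steps (inv_word w @ w) []"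
proof (induction w)
  case (Cons a w)
  have "inv_word (a # w) @ a # w = inv_word w @ inv_letter a # inv_letter (inv_letter a) # w"
    by (simp add: inv_word_def)
  hence "cancel_step (inv_word (a # w) @ a # w) (inv_word w @ w)"
    unfolding cancel_step_def by metis
  then show ?case using Cons by (metis converse_rtranclp_into_rtranclp)
qed (simp add: inv_word_def)

lemma reduced_word_inv_word: "reduced_word w \<Longrightarrow> reduced_word (inv_word w)"
proof (unfold reduced_word_iff_no_cancellation inv_word_def, clarify)
  fix xs a ys assume no_cancel: "\<not> (\<exists>xs a ys. w = xs @ a # inv_letter a # ys)"
    and e: "rev (map inv_letter w) = xs @ a # inv_letter a # ys"
  have "map inv_letter w = rev ys @ [inv_letter a, a] @ rev xs" using e
    by (metis append.assoc append_Cons append_Nil rev.simps rev_append rev_rev_ident)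
  hence "map inv_letter (map inv_letter w) = map inv_letter (rev ys @ [inv_letter a, a] @ rev xs)"
    by simp
  hence "w = map inv_letter (rev ys) @ a # inv_letter a # map inv_letter (rev xs)"
    by (simp add: comp_def)
  thus False using no_cancel by blast
qed

lemma carrier_free_grp: "carrier (free_grp S) = {w. fst ` set w \<subseteq> S \<and> reduced_word w}"
  and mult_free_grp: "x \<otimes>\<^bsub>free_grp S\<^esub> y = reduce_word (x @ y)"
  and one_free_grp: "\<one>\<^bsub>free_grp S\<^esub> = []"
  by (simp_all add: free_grp_def)

lemma inv_word_closed: "w \<in> carrier (free_grp S) \<Longrightarrow> inv_word w \<in> carrier (free_grp S)"
  using reduced_word_inv_word by (force simp: carrier_free_grp inv_word_def)

lemma inv_word_l_inv: "inv_word w \<otimes>\<^bsub>free_grp S\<^esub> w = \<one>\<^bsub>free_grp S\<^esub>"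
  using reduce_word_unique[OF cancel_steps_inv_word[of w]]
  by (simp add: mult_free_grp one_free_grp)

lemma group_free_grp: "group (free_grp S)"
proof (rule groupI)
  fix x y assume "x \<in> carrier (free_grp S)" "y \<in> carrier (free_grp S)"
  then show "x \<otimes>\<^bsub>free_grp S\<^esub> y \<in> carrier (free_grp S)"
    using set_reduce_word[of "x @ y"] reduced_word_reduce_word[of "x @ y"]
    by (fastforce simp: carrier_free_grp mult_free_grp)
next
  fix x y z
  show "x \<otimes>\<^bsub>free_grp S\<^esub> y \<otimes>\<^bsub>free_grp S\<^esub> z = x \<otimes>\<^bsub>free_grp S\<^esub> (y \<otimes>\<^bsub>free_grp S\<^esub> z)"
    by (simp add: mult_free_grp reduce_word_append_left reduce_word_append_right)
next
  fix x assume "x \<in> carrier (free_grp S)"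
  then show "\<one>\<^bsub>free_grp S\<^esub> \<otimes>\<^bsub>free_grp S\<^esub> x = x"
    by (simp add: carrier_free_grp mult_free_grp one_free_grp reduce_word_reduced)
next
  fix x assume "x \<in> carrier (free_grp S)"
  then show "\<exists>y\<in>carrier (free_grp S). y \<otimes>\<^bsub>free_grp S\<^esub> x = \<one>\<^bsub>free_grp S\<^esub>"
    using inv_word_closed inv_word_l_inv by blast
next
  show "\<one>\<^bsub>free_grp S\<^esub> \<in> carrier (free_grp S)"
    by (simp add: carrier_free_grp one_free_grp)
qed

lemma inv_free_grp: "w \<in> carrier (free_grp S) \<Longrightarrow> inv\<^bsub>free_grp S\<^esub> w = inv_word w"
  using group.inv_equality[OF group_free_grp inv_word_l_inv] inv_word_closed by blast

section \<open>Evaluation of words\<close>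

definition eval_letter :: "('a, 'b) monoid_scheme \<Rightarrow> ('x \<Rightarrow> 'a) \<Rightarrow> 'x \<times> bool \<Rightarrow> 'a" where
  "eval_letter G e a = (if snd a then inv\<^bsub>G\<^esub> (e (fst a)) else e (fst a))"

lemma eval_word_Nil [simp]: "eval_word G e [] = \<one>\<^bsub>G\<^esub>"
  by (simp add: eval_word_def)

lemma eval_word_Cons [simp]: "eval_word G e (a # w) = eval_letter G e a \<otimes>\<^bsub>G\<^esub> eval_word G e w"
  by (cases a) (simp add: eval_word_def eval_letter_def)

lemma eval_word_cong: "\<forall>a\<in>set w. f (fst a) = g (fst a) \<Longrightarrow> eval_word G f w = eval_word G g w"
  by (induction w) (auto simp: eval_letter_def)

context group
begin

lemma eval_letter_closed: "e (fst a) \<in> carrier G \<Longrightarrow> eval_letter G e a \<in> carrier G"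
  by (simp add: eval_letter_def)

lemma eval_word_closed: "\<forall>a\<in>set w. e (fst a) \<in> carrier G \<Longrightarrow> eval_word G e w \<in> carrier G"
  by (induction w) (auto intro: eval_letter_closed)

lemma eval_word_append:
  "\<forall>a\<in>set u. e (fst a) \<in> carrier G \<Longrightarrow> \<forall>a\<in>set v. e (fst a) \<in> carrier G \<Longrightarrow>
   eval_word G e (u @ v) = eval_word G e u \<otimes> eval_word G e v"
  by (induction u) (auto simp: m_assoc eval_letter_closed eval_word_closed)

lemma eval_word_cancel_step:
  assumes "cancel_step u v" and "\<forall>a\<in>set u. e (fst a) \<in> carrier G"
  shows "eval_word G e u = eval_word G e v \<and> (\<forall>a\<in>set v. e (fst a) \<in> carrier G)"
proof -
  obtain xs a ys where u: "u = xs @ a # inv_letter a # ys" and v: "v = xs @ ys"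
    using assms(1) unfolding cancel_step_def by blast
  have xs: "\<forall>a\<in>set xs. e (fst a) \<in> carrier G" and ys: "\<forall>a\<in>set ys. e (fst a) \<in> carrier G"
    and a: "e (fst a) \<in> carrier G" using assms(2) u by auto
  have "eval_word G e u =
      eval_word G e xs \<otimes> (eval_letter G e a \<otimes> eval_letter G e (inv_letter a) \<otimes> eval_word G e ys)"
    using xs ys a by (simp add: u eval_word_append m_assoc eval_letter_closed eval_word_closed)
  also have "\<dots> = eval_word G e v"
    using xs ys a by (simp add: v eval_letter_def eval_word_append eval_word_closed)
  finally show ?thesis using xs ys v by auto
qed

lemma eval_word_reduce_word:
  assumes "\<forall>a\<in>set w. e (fst a) \<in> carrier G"
  shows "eval_word G e (reduce_word w) = eval_word G e w"
proof -
  have "cancel_steps w v \<Longrightarrow> eval_word G e w = eval_word G e v \<and> (\<forall>a\<in>set v. e (fst a) \<in> carrier G)"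
    for v
  proof (induction rule: rtranclp_induct)
    case (step y z)
    then have "eval_word G e y = eval_word G e z \<and> (\<forall>a\<in>set z. e (fst a) \<in> carrier G)"
      using eval_word_cancel_step by blast
    then show ?case using step.IH by simp
  qed (simp add: assms)
  then show ?thesis using cancel_steps_reduce_word by metis
qed

lemma eval_word_hom: "e \<in> S \<rightarrow> carrier G \<Longrightarrow> eval_word G e \<in> hom (free_grp S) G"
proof (rule homI)
  assume e: "e \<in> S \<rightarrow> carrier G"
  have closed: "\<And>w. w \<in> carrier (free_grp S) \<Longrightarrow> \<forall>a\<in>set w. e (fst a) \<in> carrier G"
    using e by (auto simp: carrier_free_grp)
  show "\<And>w. w \<in> carrier (free_grp S) \<Longrightarrow> eval_word G e w \<in> carrier G"
    using closed eval_word_closed by blast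
  fix x y assume "x \<in> carrier (free_grp S)" "y \<in> carrier (free_grp S)"
  then show "eval_word G e (x \<otimes>\<^bsub>free_grp S\<^esub> y) = eval_word G e x \<otimes> eval_word G e y"
    using closed[of x] closed[of y] eval_word_reduce_word[of "x @ y"] eval_word_append[of x e y]
    by (simp add: mult_free_grp ball_Un)
qed

end

lemma (in group_hom) hom_eval_word:
  "\<forall>a\<in>set w. e (fst a) \<in> carrier G \<Longrightarrow> h (eval_word G e w) = eval_word H (h \<circ> e) w"
  by (induction w) (auto simp: eval_letter_def G.eval_word_closed G.eval_letter_closed)

section \<open>Actions on words\<close>

definition act_word :: "('g \<Rightarrow> 'x \<Rightarrow> 'x) \<Rightarrow> 'g \<Rightarrow> 'x word \<Rightarrow> 'x word" where
  "act_word \<alpha> \<gamma> w = map (\<lambda>(x, b). (\<alpha> \<gamma> x, b)) w"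

lemma act_word_Nil [simp]: "act_word \<alpha> \<gamma> [] = []"
  and act_word_Cons [simp]: "act_word \<alpha> \<gamma> (a # w) = (\<alpha> \<gamma> (fst a), snd a) # act_word \<alpha> \<gamma> w"
  and act_word_append [simp]: "act_word \<alpha> \<gamma> (u @ v) = act_word \<alpha> \<gamma> u @ act_word \<alpha> \<gamma> v"
  by (auto simp: act_word_def split: prod.split)

lemma fst_set_act_word: "fst ` set (act_word \<alpha> \<gamma> w) = \<alpha> \<gamma> ` fst ` set w"
  by (induction w) auto

lemma act_word_comp:
  "(\<And>x. x \<in> fst ` set w \<Longrightarrow> \<alpha> g (\<alpha> h x) = \<alpha> k x) \<Longrightarrow> act_word \<alpha> g (act_word \<alpha> h w) = act_word \<alpha> k w"
  by (induction w) auto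

lemma act_word_id: "(\<And>x. x \<in> fst ` set w \<Longrightarrow> \<alpha> g x = x) \<Longrightarrow> act_word \<alpha> g w = w"
  by (induction w) auto

lemma act_word_cancel_step: "cancel_step u v \<Longrightarrow> cancel_step (act_word \<alpha> \<gamma> u) (act_word \<alpha> \<gamma> v)"
proof -
  assume "cancel_step u v"
  then obtain xs a ys where u: "u = xs @ a # inv_letter a # ys" and v: "v = xs @ ys"
    unfolding cancel_step_def by blast
  let ?b = "(\<alpha> \<gamma> (fst a), snd a)"
  have "act_word \<alpha> \<gamma> u = act_word \<alpha> \<gamma> xs @ ?b # inv_letter ?b # act_word \<alpha> \<gamma> ys"
    using u by (simp add: inv_letter_def)
  then show ?thesis using v unfolding cancel_step_def by auto
qed

lemma act_word_cancel_steps: "cancel_steps u v \<Longrightarrow> cancel_steps (act_word \<alpha> \<gamma> u) (act_word \<alpha> \<gamma> v)"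
proof (induction rule: rtranclp_induct)
  case (step y z)
  then show ?case using act_word_cancel_step by (metis rtranclp.rtrancl_into_rtrancl)
qed simp

lemma reduced_word_act_word:
  assumes "reduced_word w" "inj_on (\<alpha> \<gamma>) S" "fst ` set w \<subseteq> S"
  shows "reduced_word (act_word \<alpha> \<gamma> w)"
proof (unfold reduced_word_def, intro allI impI notI)
  fix i assume i: "Suc i < length (act_word \<alpha> \<gamma> w)"
    and c: "fst (act_word \<alpha> \<gamma> w ! i) = fst (act_word \<alpha> \<gamma> w ! Suc i) \<and>
            snd (act_word \<alpha> \<gamma> w ! i) \<noteq> snd (act_word \<alpha> \<gamma> w ! Suc i)"
  have len: "Suc i < length w" using i by (simp add: act_word_def)
  have "w ! i \<in> set w" "w ! Suc i \<in> set w" using len by auto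
  then have S: "fst (w ! i) \<in> S" "fst (w ! Suc i) \<in> S" using assms(3) by auto
  have "\<alpha> \<gamma> (fst (w ! i)) = \<alpha> \<gamma> (fst (w ! Suc i))" "snd (w ! i) \<noteq> snd (w ! Suc i)"
    using c len by (simp_all add: act_word_def case_prod_beta)
  then have "fst (w ! i) = fst (w ! Suc i) \<and> snd (w ! i) \<noteq> snd (w ! Suc i)"
    using S assms(2) by (meson inj_onD)
  then show False using len assms(1) unfolding reduced_word_def by blast
qed

lemma act_word_hom:
  assumes "inj_on (\<alpha> \<gamma>) S" "\<alpha> \<gamma> ` S \<subseteq> S"
  shows "act_word \<alpha> \<gamma> \<in> hom (free_grp S) (free_grp S)"
proof (rule homI)
  fix x assume x: "x \<in> carrier (free_grp S)"
  have "fst ` set (act_word \<alpha> \<gamma> x) \<subseteq> S"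
    using x assms(2) by (simp add: carrier_free_grp fst_set_act_word) (metis image_mono order_trans)
  then show "act_word \<alpha> \<gamma> x \<in> carrier (free_grp S)"
    using reduced_word_act_word[where \<alpha>=\<alpha> and \<gamma>=\<gamma> and S=S, OF _ assms(1)] x by (simp add: carrier_free_grp)
next
  fix x y assume "x \<in> carrier (free_grp S)" "y \<in> carrier (free_grp S)"
  then have xy: "fst ` set (x @ y) \<subseteq> S" by (auto simp: carrier_free_grp)
  have "reduce_word (act_word \<alpha> \<gamma> (x @ y)) = act_word \<alpha> \<gamma> (reduce_word (x @ y))"
  proof (rule reduce_word_unique)
    show "cancel_steps (act_word \<alpha> \<gamma> (x @ y)) (act_word \<alpha> \<gamma> (reduce_word (x @ y)))"
      by (rule act_word_cancel_steps[OF cancel_steps_reduce_word])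
    show "reduced_word (act_word \<alpha> \<gamma> (reduce_word (x @ y)))"
      using reduced_word_act_word[where \<alpha>=\<alpha> and \<gamma>=\<gamma> and S=S, OF reduced_word_reduce_word assms(1)] set_reduce_word xy
      by (metis image_mono order_trans)
  qed
  then show "act_word \<alpha> \<gamma> (x \<otimes>\<^bsub>free_grp S\<^esub> y) = act_word \<alpha> \<gamma> x \<otimes>\<^bsub>free_grp S\<^esub> act_word \<alpha> \<gamma> y"
    by (simp add: mult_free_grp)
qed

lemma (in group) eval_word_act_word:
  assumes "f \<in> hom G G" "\<forall>a\<in>set w. \<phi> (fst a) \<in> carrier G"
    "\<forall>a\<in>set w. \<phi> (\<alpha> \<gamma> (fst a)) = f (\<phi> (fst a))"
  shows "eval_word G \<phi> (act_word \<alpha> \<gamma> w) = f (eval_word G \<phi> w)"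
proof -
  interpret f: group_hom G G f by (simp add: group_hom_axioms.intro group_hom_def is_group assms(1))
  have "eval_word G \<phi> (act_word \<alpha> \<gamma> w) = eval_word G (f \<circ> \<phi>) w"
    using assms(3) by (induction w) (auto simp: eval_letter_def)
  then show ?thesis using f.hom_eval_word[OF assms(2)] by simp
qed

lemma (in group) normal_closure_normal:
  assumes "A \<subseteq> carrier G"
  shows "normal_closure G A \<lhd> G"
proof -
  let ?F = "{N. N \<lhd> G \<and> A \<subseteq> N}"
  have "carrier G \<in> ?F" using assms by (auto intro: normal_invI subgroup_self)
  then have "subgroup (\<Inter>?F) G" by (intro subgroups_Inter) (auto dest: normal_imp_subgroup)
  moreover have "x \<otimes> h \<otimes> inv x \<in> \<Inter>?F" if "x \<in> carrier G" "h \<in> \<Inter>?F" for x h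
    using that normal_invE(2) by blast
  ultimately show ?thesis unfolding normal_closure_def by (rule normal_invI)
qed

lemma subset_normal_closure: "A \<subseteq> normal_closure G A"
  and normal_closure_least: "K \<lhd> G \<Longrightarrow> A \<subseteq> K \<Longrightarrow> normal_closure G A \<subseteq> K"
  unfolding normal_closure_def by auto

section \<open>Crossed modules and their morphisms\<close>

context
  fixes \<Gamma> :: "'g monoid" and M :: "('a, 'g) xmod"
  assumes M: "crossed_module \<Gamma> M"
begin

lemma crossed_module_group: "group (xgrp M)"
  and xact_hom: "\<gamma> \<in> carrier \<Gamma> \<Longrightarrow> xact M \<gamma> \<in> hom (xgrp M) (xgrp M)"
  and xact_one: "x \<in> carrier (xgrp M) \<Longrightarrow> xact M \<one>\<^bsub>\<Gamma>\<^esub> x = x"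
  and xact_mult: "\<gamma> \<in> carrier \<Gamma> \<Longrightarrow> \<delta> \<in> carrier \<Gamma> \<Longrightarrow> x \<in> carrier (xgrp M) \<Longrightarrow>
    xact M (\<gamma> \<otimes>\<^bsub>\<Gamma>\<^esub> \<delta>) x = xact M \<gamma> (xact M \<delta> x)"
  and xmu_hom: "xmu M \<in> hom (xgrp M) \<Gamma>"
  and xmu_xact: "\<gamma> \<in> carrier \<Gamma> \<Longrightarrow> x \<in> carrier (xgrp M) \<Longrightarrow>
    xmu M (xact M \<gamma> x) = \<gamma> \<otimes>\<^bsub>\<Gamma>\<^esub> xmu M x \<otimes>\<^bsub>\<Gamma>\<^esub> inv\<^bsub>\<Gamma>\<^esub> \<gamma>"
  and xact_xmu: "x \<in> carrier (xgrp M) \<Longrightarrow> y \<in> carrier (xgrp M) \<Longrightarrow>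
    xact M (xmu M x) y = x \<otimes>\<^bsub>xgrp M\<^esub> y \<otimes>\<^bsub>xgrp M\<^esub> inv\<^bsub>xgrp M\<^esub> x"
  using M by (simp_all add: crossed_module_def)

lemma xact_closed: "\<gamma> \<in> carrier \<Gamma> \<Longrightarrow> x \<in> carrier (xgrp M) \<Longrightarrow> xact M \<gamma> x \<in> carrier (xgrp M)"
  by (rule hom_in_carrier[OF xact_hom])

end

lemma xmod_hom_closed: "xmod_hom \<Gamma> A B f \<Longrightarrow> x \<in> carrier (xgrp A) \<Longrightarrow> f x \<in> carrier (xgrp B)"
  unfolding xmod_hom_def by (metis hom_in_carrier)

lemma xmod_hom_comp:
  assumes f: "xmod_hom \<Gamma> A B f" and g: "xmod_hom \<Gamma> B C g"
  shows "xmod_hom \<Gamma> A C (g \<circ> f)"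
  unfolding xmod_hom_def
proof (intro conjI ballI)
  show "g \<circ> f \<in> hom (xgrp A) (xgrp C)"
    using f g unfolding xmod_hom_def by (blast intro: hom_compose)
qed (use f g xmod_hom_closed[OF f] in \<open>auto simp: xmod_hom_def\<close>)

lemma xmod_hom_id: "xmod_hom \<Gamma> A A id"
  unfolding xmod_hom_def by (auto intro: homI)

lemma xmod_lifts_retract:
  assumes "xmod_retract \<Gamma> Q F" and lifts: "xmod_lifts \<Gamma> F M' M f"
  shows "xmod_lifts \<Gamma> Q M' M f"
  unfolding xmod_lifts_def
proof (intro allI impI)
  obtain i r where i: "xmod_hom \<Gamma> Q F i" and r: "xmod_hom \<Gamma> F Q r"
    and ri: "\<And>x. x \<in> carrier (xgrp Q) \<Longrightarrow> r (i x) = x"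
    using assms(1) unfolding xmod_retract_def by blast
  fix h assume "xmod_hom \<Gamma> Q M h"
  then obtain k where k: "xmod_hom \<Gamma> F M' k" and fk: "\<And>x. x \<in> carrier (xgrp F) \<Longrightarrow> f (k x) = h (r x)"
    using lifts xmod_hom_comp[OF r] unfolding xmod_lifts_def by (metis comp_apply)
  have "xmod_hom \<Gamma> Q M' (k \<circ> i)" by (rule xmod_hom_comp[OF i k])
  moreover have "\<forall>x\<in>carrier (xgrp Q). f ((k \<circ> i) x) = h x"
    using fk xmod_hom_closed[OF i] ri by simp
  ultimately show "\<exists>h'. xmod_hom \<Gamma> Q M' h' \<and> (\<forall>x\<in>carrier (xgrp Q). f (h' x) = h x)" by blast
qed

lemma xmod_retract_trans:
  assumes "xmod_retract \<Gamma> R Q" and "xmod_retract \<Gamma> Q F"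
  shows "xmod_retract \<Gamma> R F"
proof -
  obtain i r where i: "xmod_hom \<Gamma> R Q i" and r: "xmod_hom \<Gamma> Q R r"
    and ri: "\<And>x. x \<in> carrier (xgrp R) \<Longrightarrow> r (i x) = x"
    using assms(1) unfolding xmod_retract_def by blast
  obtain i' r' where i': "xmod_hom \<Gamma> Q F i'" and r': "xmod_hom \<Gamma> F Q r'"
    and ri': "\<And>x. x \<in> carrier (xgrp Q) \<Longrightarrow> r' (i' x) = x"
    using assms(2) unfolding xmod_retract_def by blast
  have "\<forall>x\<in>carrier (xgrp R). (r \<circ> r') ((i' \<circ> i) x) = x"
    using ri ri' xmod_hom_closed[OF i] by simp
  then show ?thesis
    unfolding xmod_retract_def using xmod_hom_comp[OF i i'] xmod_hom_comp[OF r' r] by blast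
qed

lemma xmod_retract_refl: "xmod_retract \<Gamma> Q Q"
  unfolding xmod_retract_def using xmod_hom_id by fastforce

section \<open>Peiffer quotients\<close>

lemma (in group) inv_mult_cancel_left: "x \<in> carrier G \<Longrightarrow> y \<in> carrier G \<Longrightarrow> inv x \<otimes> (x \<otimes> y) = y"
  and mult_inv_cancel_left: "x \<in> carrier G \<Longrightarrow> y \<in> carrier G \<Longrightarrow> x \<otimes> (inv x \<otimes> y) = y"
  by (simp_all add: m_assoc[symmetric])

text \<open>Pushes a function down to cosets through an arbitrary representative, as the boundary map of
  \<^const>\<open>peiffer_quot\<close> does.\<close>

definition lift_coset :: "('w \<Rightarrow> 'b) \<Rightarrow> 'w set \<Rightarrow> 'b" where
  "lift_coset \<psi> C = \<psi> (SOME v. v \<in> C)"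

locale peiffer_quotient = \<Gamma>: group \<Gamma> for \<Gamma> :: "'g monoid" +
  fixes M :: "('a, 'g) xmod" and S :: "'x set"
    and \<alpha> :: "'g \<Rightarrow> 'x \<Rightarrow> 'x" and e :: "'x \<Rightarrow> 'a"
  assumes M: "crossed_module \<Gamma> M"
    and \<alpha>_closed: "\<And>\<gamma> x. \<gamma> \<in> carrier \<Gamma> \<Longrightarrow> x \<in> S \<Longrightarrow> \<alpha> \<gamma> x \<in> S"
    and \<alpha>_one: "\<And>x. x \<in> S \<Longrightarrow> \<alpha> \<one>\<^bsub>\<Gamma>\<^esub> x = x"
    and \<alpha>_mult: "\<And>\<gamma> \<delta> x. \<gamma> \<in> carrier \<Gamma> \<Longrightarrow> \<delta> \<in> carrier \<Gamma> \<Longrightarrow> x \<in> S \<Longrightarrow>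
        \<alpha> (\<gamma> \<otimes>\<^bsub>\<Gamma>\<^esub> \<delta>) x = \<alpha> \<gamma> (\<alpha> \<delta> x)"
    and e_closed: "\<And>x. x \<in> S \<Longrightarrow> e x \<in> carrier (xgrp M)"
    and e_equivariant: "\<And>\<gamma> x. \<gamma> \<in> carrier \<Gamma> \<Longrightarrow> x \<in> S \<Longrightarrow> e (\<alpha> \<gamma> x) = xact M \<gamma> (e x)"
begin

abbreviation "Fr \<equiv> free_grp S"

sublocale Fr: group Fr by (rule group_free_grp)

sublocale GM: group "xgrp M" by (rule crossed_module_group[OF M])

definition boundary :: "'x word \<Rightarrow> 'g" where
  "boundary w = xmu M (eval_word (xgrp M) e w)"

definition peiffer_elements :: "'x word set" where
  "peiffer_elements = {act_word \<alpha> (boundary x) x' \<otimes>\<^bsub>Fr\<^esub> x \<otimes>\<^bsub>Fr\<^esub> inv\<^bsub>Fr\<^esub> x' \<otimes>\<^bsub>Fr\<^esub> inv\<^bsub>Fr\<^esub> x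
         | x x'. x \<in> carrier Fr \<and> x' \<in> carrier Fr}"

definition peiffer_subgroup :: "'x word set" where
  "peiffer_subgroup = normal_closure Fr peiffer_elements"

abbreviation "N \<equiv> peiffer_subgroup"

abbreviation "Q \<equiv> peiffer_quot \<Gamma> M S \<alpha> e"

lemma xgrp_Q: "xgrp Q = Fr Mod N" and xact_Q: "xact Q = (\<lambda>\<gamma> C. act_word \<alpha> \<gamma> ` C)"
  and xmu_Q: "xmu Q = lift_coset boundary"
  by (simp_all add: peiffer_quot_def Let_def peiffer_subgroup_def peiffer_elements_def
      boundary_def act_word_def lift_coset_def fun_eq_iff)

lemma letter_in_S: "w \<in> carrier Fr \<Longrightarrow> a \<in> set w \<Longrightarrow> fst a \<in> S"
  by (auto simp: carrier_free_grp)

lemma act_word_in_hom: "\<gamma> \<in> carrier \<Gamma> \<Longrightarrow> act_word \<alpha> \<gamma> \<in> hom Fr Fr"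
proof (rule act_word_hom)
  assume \<gamma>: "\<gamma> \<in> carrier \<Gamma>"
  show "inj_on (\<alpha> \<gamma>) S"
  proof (rule inj_onI)
    fix x y assume "x \<in> S" "y \<in> S" "\<alpha> \<gamma> x = \<alpha> \<gamma> y"
    moreover have "\<alpha> (inv\<^bsub>\<Gamma>\<^esub> \<gamma>) (\<alpha> \<gamma> z) = z" if "z \<in> S" for z
      using \<alpha>_mult[of "inv\<^bsub>\<Gamma>\<^esub> \<gamma>" \<gamma> z] \<alpha>_one that \<gamma> by simp
    ultimately show "x = y" by metis
  qed
  show "\<alpha> \<gamma> ` S \<subseteq> S" using \<alpha>_closed \<gamma> by blast
qed

lemma act_word_closed: "\<gamma> \<in> carrier \<Gamma> \<Longrightarrow> w \<in> carrier Fr \<Longrightarrow> act_word \<alpha> \<gamma> w \<in> carrier Fr"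
  by (rule hom_in_carrier[OF act_word_in_hom])

lemma act_word_mult: "\<gamma> \<in> carrier \<Gamma> \<Longrightarrow> u \<in> carrier Fr \<Longrightarrow> v \<in> carrier Fr \<Longrightarrow>
   act_word \<alpha> \<gamma> (u \<otimes>\<^bsub>Fr\<^esub> v) = act_word \<alpha> \<gamma> u \<otimes>\<^bsub>Fr\<^esub> act_word \<alpha> \<gamma> v"
  by (rule hom_mult[OF act_word_in_hom])

lemma act_word_inv: "\<gamma> \<in> carrier \<Gamma> \<Longrightarrow> u \<in> carrier Fr \<Longrightarrow>
   act_word \<alpha> \<gamma> (inv\<^bsub>Fr\<^esub> u) = inv\<^bsub>Fr\<^esub> (act_word \<alpha> \<gamma> u)"
  by (intro group_hom.hom_inv group_hom.intro group_hom_axioms.intro Fr.is_group act_word_in_hom)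

lemma act_word_act_word: "\<gamma> \<in> carrier \<Gamma> \<Longrightarrow> \<delta> \<in> carrier \<Gamma> \<Longrightarrow> w \<in> carrier Fr \<Longrightarrow>
   act_word \<alpha> \<gamma> (act_word \<alpha> \<delta> w) = act_word \<alpha> (\<gamma> \<otimes>\<^bsub>\<Gamma>\<^esub> \<delta>) w"
  by (rule act_word_comp) (auto simp: \<alpha>_mult carrier_free_grp)

lemma act_word_one: "w \<in> carrier Fr \<Longrightarrow> act_word \<alpha> \<one>\<^bsub>\<Gamma>\<^esub> w = w"
  by (rule act_word_id) (auto simp: \<alpha>_one carrier_free_grp)

lemma eval_M_hom: "eval_word (xgrp M) e \<in> hom Fr (xgrp M)"
  using e_closed by (intro GM.eval_word_hom) auto

lemma eval_M_act_word: "\<gamma> \<in> carrier \<Gamma> \<Longrightarrow> w \<in> carrier Fr \<Longrightarrow>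
   eval_word (xgrp M) e (act_word \<alpha> \<gamma> w) = xact M \<gamma> (eval_word (xgrp M) e w)"
  using letter_in_S e_closed e_equivariant by (intro GM.eval_word_act_word xact_hom[OF M]) auto

lemma boundary_hom: "boundary \<in> hom Fr \<Gamma>"
  unfolding boundary_def using hom_compose[OF eval_M_hom xmu_hom[OF M]] by (simp add: comp_def)

lemma boundary_closed: "w \<in> carrier Fr \<Longrightarrow> boundary w \<in> carrier \<Gamma>"
  by (rule hom_in_carrier[OF boundary_hom])

lemma boundary_act_word: "\<gamma> \<in> carrier \<Gamma> \<Longrightarrow> w \<in> carrier Fr \<Longrightarrow>
   boundary (act_word \<alpha> \<gamma> w) = \<gamma> \<otimes>\<^bsub>\<Gamma>\<^esub> boundary w \<otimes>\<^bsub>\<Gamma>\<^esub> inv\<^bsub>\<Gamma>\<^esub> \<gamma>"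
  unfolding boundary_def by (simp add: eval_M_act_word xmu_xact[OF M] hom_in_carrier[OF eval_M_hom])

lemma peiffer_elementE:
  assumes "p \<in> peiffer_elements"
  obtains x x' where "x \<in> carrier Fr" "x' \<in> carrier Fr"
    "p = act_word \<alpha> (boundary x) x' \<otimes>\<^bsub>Fr\<^esub> x \<otimes>\<^bsub>Fr\<^esub> inv\<^bsub>Fr\<^esub> x' \<otimes>\<^bsub>Fr\<^esub> inv\<^bsub>Fr\<^esub> x"
  using assms unfolding peiffer_elements_def by blast

lemma peiffer_elements_subset: "peiffer_elements \<subseteq> carrier Fr"
  by (auto elim!: peiffer_elementE simp: act_word_closed boundary_closed)

lemma peiffer_subgroup_normal: "N \<lhd> Fr"
  unfolding peiffer_subgroup_def by (rule Fr.normal_closure_normal[OF peiffer_elements_subset])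

lemma peiffer_subgroup_subgroup: "subgroup N Fr"
  by (rule normal_imp_subgroup[OF peiffer_subgroup_normal])

lemma peiffer_elements_subset_subgroup: "peiffer_elements \<subseteq> N"
  unfolding peiffer_subgroup_def by (rule subset_normal_closure)

lemma peiffer_subgroup_least: "K \<lhd> Fr \<Longrightarrow> peiffer_elements \<subseteq> K \<Longrightarrow> N \<subseteq> K"
  unfolding peiffer_subgroup_def by (rule normal_closure_least)

lemma peiffer_subgroup_subset: "N \<subseteq> carrier Fr"
  by (rule subgroup.subset[OF peiffer_subgroup_subgroup])

text \<open>The Peiffer elements are permuted by the action because \<^const>\<open>boundary\<close> is equivariant.\<close>

lemma act_word_peiffer_element:
  assumes \<gamma>: "\<gamma> \<in> carrier \<Gamma>" and "p \<in> peiffer_elements"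
  shows "act_word \<alpha> \<gamma> p \<in> peiffer_elements"
proof -
  obtain x x' where x: "x \<in> carrier Fr" and x': "x' \<in> carrier Fr"
    and p: "p = act_word \<alpha> (boundary x) x' \<otimes>\<^bsub>Fr\<^esub> x \<otimes>\<^bsub>Fr\<^esub> inv\<^bsub>Fr\<^esub> x' \<otimes>\<^bsub>Fr\<^esub> inv\<^bsub>Fr\<^esub> x"
    using assms(2) by (rule peiffer_elementE)
  have "\<gamma> \<otimes>\<^bsub>\<Gamma>\<^esub> boundary x = boundary (act_word \<alpha> \<gamma> x) \<otimes>\<^bsub>\<Gamma>\<^esub> \<gamma>"
    using \<gamma> x by (simp add: boundary_act_word boundary_closed \<Gamma>.m_assoc)
  then have "act_word \<alpha> \<gamma> (act_word \<alpha> (boundary x) x') =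
      act_word \<alpha> (boundary (act_word \<alpha> \<gamma> x)) (act_word \<alpha> \<gamma> x')"
    using \<gamma> x x' by (simp add: act_word_act_word boundary_closed act_word_closed)
  then have "act_word \<alpha> \<gamma> p = act_word \<alpha> (boundary (act_word \<alpha> \<gamma> x)) (act_word \<alpha> \<gamma> x')
      \<otimes>\<^bsub>Fr\<^esub> act_word \<alpha> \<gamma> x \<otimes>\<^bsub>Fr\<^esub> inv\<^bsub>Fr\<^esub> (act_word \<alpha> \<gamma> x') \<otimes>\<^bsub>Fr\<^esub> inv\<^bsub>Fr\<^esub> (act_word \<alpha> \<gamma> x)"
    unfolding p using \<gamma> x x' by (simp add: act_word_mult act_word_inv act_word_closed boundary_closed)
  then show ?thesis unfolding peiffer_elements_def using act_word_closed \<gamma> x x' by blast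
qed

lemma act_word_peiffer_subgroup_subset: "\<gamma> \<in> carrier \<Gamma> \<Longrightarrow> act_word \<alpha> \<gamma> ` N \<subseteq> N"
proof -
  assume \<gamma>: "\<gamma> \<in> carrier \<Gamma>"
  let ?K = "{w \<in> carrier Fr. act_word \<alpha> \<gamma> w \<in> N}"
  interpret \<gamma>: group_hom Fr Fr "act_word \<alpha> \<gamma>"
    by (intro group_hom.intro group_hom_axioms.intro Fr.is_group act_word_in_hom \<gamma>)
  interpret N: subgroup N Fr by (rule peiffer_subgroup_subgroup)
  have "\<one>\<^bsub>Fr\<^esub> \<in> ?K" by simp
  then have "subgroup ?K Fr"
    by (intro Fr.subgroupI) (auto simp: act_word_mult[OF \<gamma>] act_word_inv[OF \<gamma>])
  moreover have "x \<otimes>\<^bsub>Fr\<^esub> h \<otimes>\<^bsub>Fr\<^esub> inv\<^bsub>Fr\<^esub> x \<in> ?K" if x: "x \<in> carrier Fr" and h: "h \<in> ?K" for x h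
  proof -
    have "act_word \<alpha> \<gamma> (x \<otimes>\<^bsub>Fr\<^esub> h \<otimes>\<^bsub>Fr\<^esub> inv\<^bsub>Fr\<^esub> x)
        = act_word \<alpha> \<gamma> x \<otimes>\<^bsub>Fr\<^esub> act_word \<alpha> \<gamma> h \<otimes>\<^bsub>Fr\<^esub> inv\<^bsub>Fr\<^esub> (act_word \<alpha> \<gamma> x)"
      using x h \<gamma> by (simp add: act_word_mult act_word_inv)
    also have "\<dots> \<in> N"
      using h x act_word_closed[OF \<gamma> x] peiffer_subgroup_normal by (simp add: Fr.normal_invE(2))
    finally show ?thesis using x h by simp
  qed
  ultimately have "?K \<lhd> Fr" by (rule Fr.normal_invI)
  moreover have "peiffer_elements \<subseteq> ?K"
    using peiffer_elements_subset act_word_peiffer_element[OF \<gamma>] peiffer_elements_subset_subgroup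
    by blast
  ultimately have "N \<subseteq> ?K" by (rule peiffer_subgroup_least)
  then show ?thesis by blast
qed

lemma act_word_peiffer_subgroup: "\<gamma> \<in> carrier \<Gamma> \<Longrightarrow> act_word \<alpha> \<gamma> ` N = N"
proof
  assume \<gamma>: "\<gamma> \<in> carrier \<Gamma>"
  show "act_word \<alpha> \<gamma> ` N \<subseteq> N" by (rule act_word_peiffer_subgroup_subset[OF \<gamma>])
  show "N \<subseteq> act_word \<alpha> \<gamma> ` N"
  proof
    fix n assume n: "n \<in> N"
    then have "n = act_word \<alpha> \<gamma> (act_word \<alpha> (inv\<^bsub>\<Gamma>\<^esub> \<gamma>) n)"
      using \<gamma> peiffer_subgroup_subset by (auto simp: act_word_act_word act_word_one)
    moreover have "act_word \<alpha> (inv\<^bsub>\<Gamma>\<^esub> \<gamma>) n \<in> N"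
      using act_word_peiffer_subgroup_subset \<gamma> n by blast
    ultimately show "n \<in> act_word \<alpha> \<gamma> ` N" by blast
  qed
qed

abbreviation cls :: "'x word \<Rightarrow> 'x word set" where
  "cls w \<equiv> N #>\<^bsub>Fr\<^esub> w"

lemma quotient_group: "group (Fr Mod N)"
  by (rule normal.factorgroup_is_group[OF peiffer_subgroup_normal])

lemma cls_hom: "cls \<in> hom Fr (Fr Mod N)"
  by (rule normal.r_coset_hom_Mod[OF peiffer_subgroup_normal])

sublocale cls: group_hom Fr "Fr Mod N" cls
  by (intro group_hom.intro group_hom_axioms.intro Fr.is_group quotient_group cls_hom)

lemma cls_closed: "w \<in> carrier Fr \<Longrightarrow> cls w \<in> carrier (Fr Mod N)"
  by (rule cls.hom_closed)

lemma cls_mult: "w \<in> carrier Fr \<Longrightarrow> v \<in> carrier Fr \<Longrightarrow>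
   cls w \<otimes>\<^bsub>Fr Mod N\<^esub> cls v = cls (w \<otimes>\<^bsub>Fr\<^esub> v)"
  by (simp add: cls.hom_mult)

lemma cls_inv: "w \<in> carrier Fr \<Longrightarrow> inv\<^bsub>Fr Mod N\<^esub> (cls w) = cls (inv\<^bsub>Fr\<^esub> w)"
  by simp

lemma quotient_cases:
  assumes "C \<in> carrier (xgrp Q)"
  obtains w where "w \<in> carrier Fr" "C = cls w"
  using assms by (auto simp: xgrp_Q carrier_FactGroup)

lemma act_word_cls: "\<gamma> \<in> carrier \<Gamma> \<Longrightarrow> w \<in> carrier Fr \<Longrightarrow> act_word \<alpha> \<gamma> ` cls w = cls (act_word \<alpha> \<gamma> w)"
  using act_word_peiffer_subgroup peiffer_subgroup_subset
  by (auto simp: r_coset_def act_word_mult image_iff subset_iff) (metis act_word_mult image_iff)+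

context
  fixes H :: "('h, 'c) monoid_scheme" and \<psi> :: "'x word \<Rightarrow> 'h"
  assumes H: "group H" and \<psi>: "\<psi> \<in> hom Fr H"
    and kills: "\<And>p. p \<in> peiffer_elements \<Longrightarrow> \<psi> p = \<one>\<^bsub>H\<^esub>"
begin

interpretation \<psi>: group_hom Fr H \<psi>
  by (intro group_hom.intro group_hom_axioms.intro Fr.is_group H \<psi>)

lemma lift_coset_cls: "w \<in> carrier Fr \<Longrightarrow> lift_coset \<psi> (cls w) = \<psi> w"
proof -
  assume w: "w \<in> carrier Fr"
  have "N \<subseteq> kernel Fr H \<psi>"
    using peiffer_elements_subset kills
    by (intro peiffer_subgroup_least \<psi>.normal_kernel) (auto simp: kernel_def)
  moreover have "w \<in> cls w" by (rule Fr.rcos_self[OF w peiffer_subgroup_subgroup])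
  then have "(SOME v. v \<in> cls w) \<in> cls w" by (rule someI)
  then obtain n where "n \<in> N" and "(SOME v. v \<in> cls w) = n \<otimes>\<^bsub>Fr\<^esub> w"
    unfolding r_coset_def by blast
  ultimately show ?thesis
    using w peiffer_subgroup_subset by (auto simp: lift_coset_def kernel_def)
qed

lemma lift_coset_hom: "lift_coset \<psi> \<in> hom (Fr Mod N) H"
proof (rule homI)
  fix C assume "C \<in> carrier (Fr Mod N)"
  then show "lift_coset \<psi> C \<in> carrier H"
    using quotient_cases lift_coset_cls by (metis \<psi>.hom_closed xgrp_Q)
next
  fix C D assume "C \<in> carrier (Fr Mod N)" "D \<in> carrier (Fr Mod N)"
  then obtain w v where "w \<in> carrier Fr" "C = cls w" "v \<in> carrier Fr" "D = cls v"
    by (metis quotient_cases xgrp_Q)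
  then show "lift_coset \<psi> (C \<otimes>\<^bsub>Fr Mod N\<^esub> D) = lift_coset \<psi> C \<otimes>\<^bsub>H\<^esub> lift_coset \<psi> D"
    by (simp only: cls_mult lift_coset_cls Fr.m_closed \<psi>.hom_mult)
qed

end

lemma peiffer_element_vanishes:
  assumes H: "group H" and \<psi>: "\<psi> \<in> hom Fr H"
    and conj: "\<And>x x'. x \<in> carrier Fr \<Longrightarrow> x' \<in> carrier Fr \<Longrightarrow>
       \<psi> (act_word \<alpha> (boundary x) x') = \<psi> x \<otimes>\<^bsub>H\<^esub> \<psi> x' \<otimes>\<^bsub>H\<^esub> inv\<^bsub>H\<^esub> \<psi> x"
    and p: "p \<in> peiffer_elements"
  shows "\<psi> p = \<one>\<^bsub>H\<^esub>"
proof -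
  interpret H: group H by (rule H)
  interpret \<psi>: group_hom Fr H \<psi> by (intro group_hom.intro group_hom_axioms.intro Fr.is_group H \<psi>)
  obtain x x' where x: "x \<in> carrier Fr" and x': "x' \<in> carrier Fr"
    and p: "p = act_word \<alpha> (boundary x) x' \<otimes>\<^bsub>Fr\<^esub> x \<otimes>\<^bsub>Fr\<^esub> inv\<^bsub>Fr\<^esub> x' \<otimes>\<^bsub>Fr\<^esub> inv\<^bsub>Fr\<^esub> x"
    using p by (rule peiffer_elementE)
  show ?thesis
    using x x' by (simp add: p conj act_word_closed boundary_closed H.m_assoc H.inv_mult_cancel_left)
qed

lemma boundary_peiffer_element: "p \<in> peiffer_elements \<Longrightarrow> boundary p = \<one>\<^bsub>\<Gamma>\<^esub>"
  by (rule peiffer_element_vanishes[OF \<Gamma>.is_group boundary_hom])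
    (simp_all add: boundary_act_word boundary_closed)

lemma xmu_cls: "w \<in> carrier Fr \<Longrightarrow> xmu Q (cls w) = boundary w"
  unfolding xmu_Q by (rule lift_coset_cls[OF \<Gamma>.is_group boundary_hom boundary_peiffer_element])

lemma xmu_Q_hom: "xmu Q \<in> hom (xgrp Q) \<Gamma>"
  unfolding xmu_Q xgrp_Q by (rule lift_coset_hom[OF \<Gamma>.is_group boundary_hom boundary_peiffer_element])

lemma xact_cls: "\<gamma> \<in> carrier \<Gamma> \<Longrightarrow> w \<in> carrier Fr \<Longrightarrow> xact Q \<gamma> (cls w) = cls (act_word \<alpha> \<gamma> w)"
  by (simp add: xact_Q act_word_cls)

lemma xact_Q_hom: "\<gamma> \<in> carrier \<Gamma> \<Longrightarrow> xact Q \<gamma> \<in> hom (xgrp Q) (xgrp Q)"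
proof (rule homI)
  fix C assume "\<gamma> \<in> carrier \<Gamma>" "C \<in> carrier (xgrp Q)"
  then show "xact Q \<gamma> C \<in> carrier (xgrp Q)"
    by (metis quotient_cases xact_cls cls_closed act_word_closed xgrp_Q)
next
  fix C D assume \<gamma>: "\<gamma> \<in> carrier \<Gamma>" and "C \<in> carrier (xgrp Q)" "D \<in> carrier (xgrp Q)"
  then obtain w v where "w \<in> carrier Fr" "C = cls w" "v \<in> carrier Fr" "D = cls v"
    by (metis quotient_cases)
  with \<gamma> show "xact Q \<gamma> (C \<otimes>\<^bsub>xgrp Q\<^esub> D) = xact Q \<gamma> C \<otimes>\<^bsub>xgrp Q\<^esub> xact Q \<gamma> D"
    by (simp only: xgrp_Q cls_mult xact_cls act_word_mult act_word_closed Fr.m_closed)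
qed

text \<open>The Peiffer identity holds in \<^term>\<open>Q\<close> because its two sides differ by a Peiffer element.\<close>

lemma xact_xmu_Q:
  assumes "C \<in> carrier (xgrp Q)" "D \<in> carrier (xgrp Q)"
  shows "xact Q (xmu Q C) D = C \<otimes>\<^bsub>xgrp Q\<^esub> D \<otimes>\<^bsub>xgrp Q\<^esub> inv\<^bsub>xgrp Q\<^esub> C"
proof -
  obtain w v where w: "w \<in> carrier Fr" and C: "C = cls w" and v: "v \<in> carrier Fr" and D: "D = cls v"
    using assms by (metis quotient_cases)
  let ?a = "act_word \<alpha> (boundary w) v" and ?b = "w \<otimes>\<^bsub>Fr\<^esub> v \<otimes>\<^bsub>Fr\<^esub> inv\<^bsub>Fr\<^esub> w"
  have a: "?a \<in> carrier Fr" by (rule act_word_closed[OF boundary_closed[OF w] v])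
  have "?a \<otimes>\<^bsub>Fr\<^esub> w \<otimes>\<^bsub>Fr\<^esub> inv\<^bsub>Fr\<^esub> v \<otimes>\<^bsub>Fr\<^esub> inv\<^bsub>Fr\<^esub> w \<in> N"
    using w v peiffer_elements_subset_subgroup unfolding peiffer_elements_def by blast
  moreover have "?a \<otimes>\<^bsub>Fr\<^esub> w \<otimes>\<^bsub>Fr\<^esub> inv\<^bsub>Fr\<^esub> v \<otimes>\<^bsub>Fr\<^esub> inv\<^bsub>Fr\<^esub> w \<otimes>\<^bsub>Fr\<^esub> ?b = ?a"
    using a w v by (simp add: Fr.m_assoc Fr.inv_mult_cancel_left Fr.mult_inv_cancel_left)
  ultimately have "?a \<in> cls ?b" unfolding r_coset_def by force
  then have "cls ?a = cls ?b"
    using w v by (metis Fr.repr_independence Fr.inv_closed Fr.m_closed peiffer_subgroup_subgroup)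
  then show ?thesis
    using w v by (simp add: C D xmu_cls xact_cls boundary_closed xgrp_Q[symmetric] cls_mult[symmetric])
qed

lemma crossed_module_Q: "crossed_module \<Gamma> Q"
  unfolding crossed_module_def
proof (intro conjI ballI)
  show "group (xgrp Q)" by (simp add: xgrp_Q quotient_group)
  show "xmu Q \<in> hom (xgrp Q) \<Gamma>" by (rule xmu_Q_hom)
  fix \<gamma> assume \<gamma>: "\<gamma> \<in> carrier \<Gamma>"
  show "xact Q \<gamma> \<in> hom (xgrp Q) (xgrp Q)" by (rule xact_Q_hom[OF \<gamma>])
  fix C assume "C \<in> carrier (xgrp Q)"
  then obtain w where w: "w \<in> carrier Fr" and C: "C = cls w" by (rule quotient_cases)
  show "xmu Q (xact Q \<gamma> C) = \<gamma> \<otimes>\<^bsub>\<Gamma>\<^esub> xmu Q C \<otimes>\<^bsub>\<Gamma>\<^esub> inv\<^bsub>\<Gamma>\<^esub> \<gamma>"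
    using \<gamma> w by (simp add: C xact_cls xmu_cls act_word_closed boundary_act_word)
  fix \<delta> assume \<delta>: "\<delta> \<in> carrier \<Gamma>"
  show "xact Q (\<gamma> \<otimes>\<^bsub>\<Gamma>\<^esub> \<delta>) C = xact Q \<gamma> (xact Q \<delta> C)"
    using \<gamma> \<delta> w by (simp add: C xact_cls act_word_closed act_word_act_word)
next
  fix C assume "C \<in> carrier (xgrp Q)"
  then show "xact Q \<one>\<^bsub>\<Gamma>\<^esub> C = C" by (metis quotient_cases xact_cls \<Gamma>.one_closed act_word_one)
qed (rule xact_xmu_Q)

abbreviation gen :: "'x \<Rightarrow> 'x word set" where
  "gen x \<equiv> cls [(x, False)]"

lemma singleton_closed: "x \<in> S \<Longrightarrow> [(x, b)] \<in> carrier Fr"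
  by (simp add: carrier_free_grp)

lemma gen_closed: "x \<in> S \<Longrightarrow> gen x \<in> carrier (xgrp Q)"
  unfolding xgrp_Q by (rule cls_closed[OF singleton_closed])

lemma xact_gen: "\<gamma> \<in> carrier \<Gamma> \<Longrightarrow> x \<in> S \<Longrightarrow> xact Q \<gamma> (gen x) = gen (\<alpha> \<gamma> x)"
  by (simp add: xact_cls singleton_closed)

lemma xmu_gen: "x \<in> S \<Longrightarrow> xmu Q (gen x) = xmu M (e x)"
  by (simp add: xmu_cls singleton_closed boundary_def eval_letter_def e_closed)

lemma hom_cls_eval_word:
  assumes H: "group H" and h: "h \<in> hom (xgrp Q) H" and w: "w \<in> carrier Fr"
  shows "h (cls w) = eval_word H (\<lambda>x. h (gen x)) w"
proof -
  interpret h: group_hom "xgrp Q" H h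
    by (intro group_hom.intro group_hom_axioms.intro H h) (simp add: xgrp_Q quotient_group)
  show ?thesis
    using w
  proof (induction w)
    case Nil
    show ?case using cls.hom_one h.hom_one by (simp add: xgrp_Q one_free_grp)
  next
    case (Cons a w)
    have a: "fst a \<in> S" and w: "w \<in> carrier Fr" and aw: "[a] \<otimes>\<^bsub>Fr\<^esub> w = a # w"
      using Cons.prems reduced_word_appendD[of "[a]" w] reduce_word_reduced[of "a # w"]
      by (simp_all add: carrier_free_grp mult_free_grp)
    have "h (cls (a # w)) = h (cls [a]) \<otimes>\<^bsub>H\<^esub> h (cls w)"
      using singleton_closed[OF a, of "snd a"] w
      by (simp add: aw[symmetric] cls_mult[symmetric] xgrp_Q[symmetric] cls_closed[unfolded xgrp_Q[symmetric]])
    moreover have "h (cls [a]) = eval_letter H (\<lambda>x. h (gen x)) a"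
    proof (cases "snd a")
      case True
      then have "[a] = inv\<^bsub>Fr\<^esub> [(fst a, False)]"
        using inv_free_grp[OF singleton_closed[OF a]] by (simp add: inv_word_def inv_letter_def prod_eq_iff)
      then show ?thesis
        using True singleton_closed[OF a] gen_closed[OF a]
        by (simp add: eval_letter_def xgrp_Q[symmetric] flip: cls_inv)
    next
      case False
      then have "[a] = [(fst a, False)]" by (simp add: prod_eq_iff)
      then show ?thesis using False by (simp add: eval_letter_def)
    qed
    ultimately show ?case using Cons.IH[OF w] by simp
  qed
qed

context
  fixes Y :: "('b, 'g) xmod" and \<phi> :: "'x \<Rightarrow> 'b"
  assumes Y: "crossed_module \<Gamma> Y"
    and \<phi>_closed: "\<And>x. x \<in> S \<Longrightarrow> \<phi> x \<in> carrier (xgrp Y)"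
    and \<phi>_equivariant: "\<And>\<gamma> x. \<gamma> \<in> carrier \<Gamma> \<Longrightarrow> x \<in> S \<Longrightarrow> \<phi> (\<alpha> \<gamma> x) = xact Y \<gamma> (\<phi> x)"
    and \<phi>_xmu: "\<And>x. x \<in> S \<Longrightarrow> xmu Y (\<phi> x) = xmu M (e x)"
begin

interpretation Y: group "xgrp Y" by (rule crossed_module_group[OF Y])

lemma eval_\<phi>_hom: "eval_word (xgrp Y) \<phi> \<in> hom Fr (xgrp Y)"
  using \<phi>_closed by (intro Y.eval_word_hom) auto

interpretation \<psi>: group_hom Fr "xgrp Y" "eval_word (xgrp Y) \<phi>"
  by (intro group_hom.intro group_hom_axioms.intro Fr.is_group Y.is_group eval_\<phi>_hom)

lemma xmu_eval_\<phi>: "w \<in> carrier Fr \<Longrightarrow> xmu Y (eval_word (xgrp Y) \<phi> w) = boundary w"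
proof -
  assume w: "w \<in> carrier Fr"
  interpret \<mu>Y: group_hom "xgrp Y" \<Gamma> "xmu Y"
    by (intro group_hom.intro group_hom_axioms.intro Y.is_group \<Gamma>.is_group xmu_hom[OF Y])
  interpret \<mu>M: group_hom "xgrp M" \<Gamma> "xmu M"
    by (intro group_hom.intro group_hom_axioms.intro GM.is_group \<Gamma>.is_group xmu_hom[OF M])
  have "xmu Y (eval_word (xgrp Y) \<phi> w) = eval_word \<Gamma> (xmu Y \<circ> \<phi>) w"
    using w letter_in_S \<phi>_closed by (intro \<mu>Y.hom_eval_word) blast
  also have "\<dots> = eval_word \<Gamma> (xmu M \<circ> e) w"
    using w letter_in_S \<phi>_xmu by (intro eval_word_cong) auto
  also have "\<dots> = boundary w"
    unfolding boundary_def using w letter_in_S e_closed by (intro \<mu>M.hom_eval_word[symmetric]) blast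
  finally show ?thesis .
qed

lemma eval_\<phi>_act_word: "\<gamma> \<in> carrier \<Gamma> \<Longrightarrow> w \<in> carrier Fr \<Longrightarrow>
   eval_word (xgrp Y) \<phi> (act_word \<alpha> \<gamma> w) = xact Y \<gamma> (eval_word (xgrp Y) \<phi> w)"
  using letter_in_S \<phi>_closed \<phi>_equivariant by (intro Y.eval_word_act_word xact_hom[OF Y]) auto

text \<open>The Peiffer elements die in \<^term>\<open>Y\<close> by the Peiffer identity of \<^term>\<open>Y\<close>.\<close>

lemma eval_\<phi>_peiffer_element: "p \<in> peiffer_elements \<Longrightarrow> eval_word (xgrp Y) \<phi> p = \<one>\<^bsub>xgrp Y\<^esub>"
proof (rule peiffer_element_vanishes[OF Y.is_group eval_\<phi>_hom])
  fix x x' assume x: "x \<in> carrier Fr" and x': "x' \<in> carrier Fr"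
  have "eval_word (xgrp Y) \<phi> (act_word \<alpha> (boundary x) x')
      = xact Y (xmu Y (eval_word (xgrp Y) \<phi> x)) (eval_word (xgrp Y) \<phi> x')"
    using x x' by (simp add: eval_\<phi>_act_word boundary_closed xmu_eval_\<phi>)
  also have "\<dots> = eval_word (xgrp Y) \<phi> x \<otimes>\<^bsub>xgrp Y\<^esub> eval_word (xgrp Y) \<phi> x'
      \<otimes>\<^bsub>xgrp Y\<^esub> inv\<^bsub>xgrp Y\<^esub> eval_word (xgrp Y) \<phi> x"
    using x x' by (simp add: xact_xmu[OF Y])
  finally show "eval_word (xgrp Y) \<phi> (act_word \<alpha> (boundary x) x')
      = eval_word (xgrp Y) \<phi> x \<otimes>\<^bsub>xgrp Y\<^esub> eval_word (xgrp Y) \<phi> x'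
      \<otimes>\<^bsub>xgrp Y\<^esub> inv\<^bsub>xgrp Y\<^esub> eval_word (xgrp Y) \<phi> x" .
qed

lemma lift_coset_eval_\<phi>_cls:
  "w \<in> carrier Fr \<Longrightarrow> lift_coset (eval_word (xgrp Y) \<phi>) (cls w) = eval_word (xgrp Y) \<phi> w"
  by (rule lift_coset_cls[OF Y.is_group eval_\<phi>_hom eval_\<phi>_peiffer_element])

lemma xmod_hom_lift_coset_eval_\<phi>: "xmod_hom \<Gamma> Q Y (lift_coset (eval_word (xgrp Y) \<phi>))"
  unfolding xmod_hom_def
proof (intro conjI ballI)
  show "lift_coset (eval_word (xgrp Y) \<phi>) \<in> hom (xgrp Q) (xgrp Y)"
    unfolding xgrp_Q by (rule lift_coset_hom[OF Y.is_group eval_\<phi>_hom eval_\<phi>_peiffer_element])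
next
  fix \<gamma> C assume \<gamma>: "\<gamma> \<in> carrier \<Gamma>" and C: "C \<in> carrier (xgrp Q)"
  obtain w where "w \<in> carrier Fr" "C = cls w" using C by (rule quotient_cases)
  with \<gamma> show "lift_coset (eval_word (xgrp Y) \<phi>) (xact Q \<gamma> C) = xact Y \<gamma> (lift_coset (eval_word (xgrp Y) \<phi>) C)"
    by (simp add: xact_cls lift_coset_eval_\<phi>_cls act_word_closed eval_\<phi>_act_word)
next
  fix C assume "C \<in> carrier (xgrp Q)"
  then obtain w where "w \<in> carrier Fr" "C = cls w" by (rule quotient_cases)
  then show "xmu Y (lift_coset (eval_word (xgrp Y) \<phi>) C) = xmu Q C"
    by (simp add: lift_coset_eval_\<phi>_cls xmu_cls xmu_eval_\<phi>)
qed

end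

lemma lift_along_xmod_hom:
  assumes Y': "crossed_module \<Gamma> Y'" and Y: "crossed_module \<Gamma> Y"
    and f: "xmod_hom \<Gamma> Y' Y f" and h: "xmod_hom \<Gamma> Q Y h"
    and \<phi>_closed: "\<And>x. x \<in> S \<Longrightarrow> \<phi> x \<in> carrier (xgrp Y')"
    and \<phi>_equivariant: "\<And>\<gamma> x. \<gamma> \<in> carrier \<Gamma> \<Longrightarrow> x \<in> S \<Longrightarrow> \<phi> (\<alpha> \<gamma> x) = xact Y' \<gamma> (\<phi> x)"
    and f\<phi>: "\<And>x. x \<in> S \<Longrightarrow> f (\<phi> x) = h (gen x)"
  shows "\<exists>h'. xmod_hom \<Gamma> Q Y' h' \<and> (\<forall>C\<in>carrier (xgrp Q). f (h' C) = h C)"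
proof -
  interpret f: group_hom "xgrp Y'" "xgrp Y" f
    using f crossed_module_group[OF Y'] crossed_module_group[OF Y]
    by (intro group_hom.intro group_hom_axioms.intro) (auto simp: xmod_hom_def)
  have \<phi>_xmu: "xmu Y' (\<phi> x) = xmu M (e x)" if x: "x \<in> S" for x
  proof -
    have "xmu Y' (\<phi> x) = xmu Y (f (\<phi> x))"
      using f \<phi>_closed[OF x] by (simp add: xmod_hom_def)
    also have "\<dots> = xmu Q (gen x)"
      using h gen_closed[OF x] by (simp add: xmod_hom_def f\<phi>[OF x])
    finally show ?thesis by (simp add: xmu_gen[OF x])
  qed
  note lift = xmod_hom_lift_coset_eval_\<phi>[OF Y' \<phi>_closed \<phi>_equivariant \<phi>_xmu]
    and lift_cls = lift_coset_eval_\<phi>_cls[OF Y' \<phi>_closed \<phi>_equivariant \<phi>_xmu]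
  have "f (lift_coset (eval_word (xgrp Y') \<phi>) C) = h C" if C: "C \<in> carrier (xgrp Q)" for C
  proof -
    obtain w where w: "w \<in> carrier Fr" and C: "C = cls w" using C by (rule quotient_cases)
    have "f (lift_coset (eval_word (xgrp Y') \<phi>) C) = eval_word (xgrp Y) (f \<circ> \<phi>) w"
      using w letter_in_S \<phi>_closed by (simp add: C lift_cls f.hom_eval_word)
    also have "\<dots> = eval_word (xgrp Y) (\<lambda>x. h (gen x)) w"
      using w letter_in_S f\<phi> by (intro eval_word_cong) auto
    also have "\<dots> = h C"
      using h w unfolding C xmod_hom_def by (simp add: hom_cls_eval_word[OF crossed_module_group[OF Y]])
    finally show ?thesis .
  qed
  with lift show ?thesis by blast
qed

lemma counit:
  shows "xmod_hom \<Gamma> Q M (lift_coset (eval_word (xgrp M) e))"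
    and "x \<in> S \<Longrightarrow> lift_coset (eval_word (xgrp M) e) (gen x) = e x"
  using xmod_hom_lift_coset_eval_\<phi>[OF M e_closed e_equivariant]
    lift_coset_eval_\<phi>_cls[OF M e_closed e_equivariant]
  by (simp_all add: singleton_closed eval_letter_def e_closed)

end

section \<open>Free and equivariantly free crossed modules\<close>

lemma peiffer_quotient_free:
  assumes "group \<Gamma>" and L: "crossed_module \<Gamma> L"
  shows "peiffer_quotient \<Gamma> L (carrier \<Gamma> \<times> carrier (xgrp L))
    (\<lambda>\<gamma>' (\<gamma>, g). (\<gamma>' \<otimes>\<^bsub>\<Gamma>\<^esub> \<gamma>, g)) (\<lambda>(\<gamma>, g). xact L \<gamma> g)"
proof -
  interpret \<Gamma>: group \<Gamma> by fact
  show ?thesis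
    by unfold_locales (auto simp: L \<Gamma>.m_assoc xact_closed[OF L] xact_mult[OF L])
qed

lemma peiffer_quotient_eq_free:
  assumes "group \<Gamma>" and L: "crossed_module \<Gamma> L"
  shows "peiffer_quotient \<Gamma> L (carrier (xgrp L)) (xact L) (\<lambda>g. g)"
proof -
  interpret \<Gamma>: group \<Gamma> by fact
  show ?thesis
    by unfold_locales (auto simp: L xact_closed[OF L] xact_one[OF L] xact_mult[OF L])
qed

lemma free_xmod_lifts:
  assumes \<Gamma>: "group \<Gamma>" and M': "crossed_module \<Gamma> M'" and M: "crossed_module \<Gamma> M"
    and L: "crossed_module \<Gamma> L" and f: "xmod_surj \<Gamma> M' M f"
  shows "xmod_lifts \<Gamma> (free_xmod \<Gamma> L) M' M f"
  unfolding xmod_lifts_def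
proof (intro allI impI)
  interpret \<Gamma>: group \<Gamma> by fact
  interpret F: peiffer_quotient \<Gamma> L "carrier \<Gamma> \<times> carrier (xgrp L)"
      "\<lambda>\<gamma>' (\<gamma>, g). (\<gamma>' \<otimes>\<^bsub>\<Gamma>\<^esub> \<gamma>, g)" "\<lambda>(\<gamma>, g). xact L \<gamma> g"
    by (rule peiffer_quotient_free[OF \<Gamma> L])
  fix h assume "xmod_hom \<Gamma> (free_xmod \<Gamma> L) M h"
  then have h: "xmod_hom \<Gamma> F.Q M h" by (simp add: free_xmod_def)
  have f_hom: "xmod_hom \<Gamma> M' M f" and f_onto: "f ` carrier (xgrp M') = carrier (xgrp M)"
    using f by (auto simp: xmod_surj_def)
  have "\<forall>g\<in>carrier (xgrp L). \<exists>y. y \<in> carrier (xgrp M') \<and> f y = h (F.gen (\<one>\<^bsub>\<Gamma>\<^esub>, g))"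
  proof
    fix g assume "g \<in> carrier (xgrp L)"
    then have "(\<one>\<^bsub>\<Gamma>\<^esub>, g) \<in> carrier \<Gamma> \<times> carrier (xgrp L)" by simp
    then have "h (F.gen (\<one>\<^bsub>\<Gamma>\<^esub>, g)) \<in> f ` carrier (xgrp M')"
      unfolding f_onto by (rule xmod_hom_closed[OF h F.gen_closed])
    then show "\<exists>y. y \<in> carrier (xgrp M') \<and> f y = h (F.gen (\<one>\<^bsub>\<Gamma>\<^esub>, g))"
      by (elim imageE) auto
  qed
  from bchoice[OF this] obtain s
    where "\<forall>g\<in>carrier (xgrp L). s g \<in> carrier (xgrp M') \<and> f (s g) = h (F.gen (\<one>\<^bsub>\<Gamma>\<^esub>, g))"
    by (elim exE)
  then have s: "\<And>g. g \<in> carrier (xgrp L) \<Longrightarrow> s g \<in> carrier (xgrp M')"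
    and fs: "\<And>g. g \<in> carrier (xgrp L) \<Longrightarrow> f (s g) = h (F.gen (\<one>\<^bsub>\<Gamma>\<^esub>, g))"
    by auto
  define \<phi> where "\<phi> = (\<lambda>(\<gamma>, g). xact M' \<gamma> (s g))"
  show "\<exists>h'. xmod_hom \<Gamma> (free_xmod \<Gamma> L) M' h' \<and> (\<forall>C\<in>carrier (xgrp (free_xmod \<Gamma> L)). f (h' C) = h C)"
    unfolding free_xmod_def
  proof (rule F.lift_along_xmod_hom[OF M' M f_hom h, of \<phi>]; clarify)
    fix \<gamma> g assume \<gamma>: "\<gamma> \<in> carrier \<Gamma>" and g: "g \<in> carrier (xgrp L)"
    show "\<phi> (\<gamma>, g) \<in> carrier (xgrp M')" by (simp add: \<phi>_def xact_closed[OF M' \<gamma> s[OF g]])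
    have "f (\<phi> (\<gamma>, g)) = xact M \<gamma> (h (F.gen (\<one>\<^bsub>\<Gamma>\<^esub>, g)))"
      using f_hom \<gamma> s[OF g] by (simp add: \<phi>_def xmod_hom_def fs[OF g])
    also have "\<dots> = h (xact F.Q \<gamma> (F.gen (\<one>\<^bsub>\<Gamma>\<^esub>, g)))"
      using h \<gamma> g F.gen_closed[of "(\<one>\<^bsub>\<Gamma>\<^esub>, g)"] by (simp add: xmod_hom_def)
    also have "\<dots> = h (F.gen (\<gamma>, g))"
      using \<gamma> g by (simp add: F.xact_gen)
    finally show "f (\<phi> (\<gamma>, g)) = h (F.gen (\<gamma>, g))" .
    fix \<gamma>' assume \<gamma>': "\<gamma>' \<in> carrier \<Gamma>"
    show "\<phi> (\<gamma>' \<otimes>\<^bsub>\<Gamma>\<^esub> \<gamma>, g) = xact M' \<gamma>' (\<phi> (\<gamma>, g))"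
      using \<gamma> \<gamma>' s[OF g] by (simp add: \<phi>_def xact_mult[OF M'])
  qed
qed

lemma eq_free_xmod_lifts:
  assumes \<Gamma>: "group \<Gamma>" and M': "crossed_module \<Gamma> M'" and M: "crossed_module \<Gamma> M"
    and L: "crossed_module \<Gamma> L" and f: "xmod_eq_split \<Gamma> M' M f"
  shows "xmod_lifts \<Gamma> (eq_free_xmod \<Gamma> L) M' M f"
  unfolding xmod_lifts_def
proof (intro allI impI)
  interpret F: peiffer_quotient \<Gamma> L "carrier (xgrp L)" "xact L" "\<lambda>g. g"
    by (rule peiffer_quotient_eq_free[OF \<Gamma> L])
  fix h assume "xmod_hom \<Gamma> (eq_free_xmod \<Gamma> L) M h"
  then have h: "xmod_hom \<Gamma> F.Q M h" by (simp add: eq_free_xmod_def)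
  have f_hom: "xmod_hom \<Gamma> M' M f" using f by (simp add: xmod_eq_split_def xmod_surj_def)
  obtain s where s: "s \<in> carrier (xgrp M) \<rightarrow> carrier (xgrp M')"
    and fs: "\<And>y. y \<in> carrier (xgrp M) \<Longrightarrow> f (s y) = y"
    and s_equivariant: "\<And>\<gamma> y. \<gamma> \<in> carrier \<Gamma> \<Longrightarrow> y \<in> carrier (xgrp M) \<Longrightarrow> s (xact M \<gamma> y) = xact M' \<gamma> (s y)"
    using f unfolding xmod_eq_split_def by blast
  have hg: "\<And>g. g \<in> carrier (xgrp L) \<Longrightarrow> h (F.gen g) \<in> carrier (xgrp M)"
    by (rule xmod_hom_closed[OF h F.gen_closed])
  show "\<exists>h'. xmod_hom \<Gamma> (eq_free_xmod \<Gamma> L) M' h' \<and> (\<forall>C\<in>carrier (xgrp (eq_free_xmod \<Gamma> L)). f (h' C) = h C)"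
    unfolding eq_free_xmod_def
  proof (rule F.lift_along_xmod_hom[OF M' M f_hom h, where \<phi> = "\<lambda>g. s (h (F.gen g))"])
    fix \<gamma> g assume \<gamma>: "\<gamma> \<in> carrier \<Gamma>" and g: "g \<in> carrier (xgrp L)"
    have "h (F.gen (xact L \<gamma> g)) = xact M \<gamma> (h (F.gen g))"
      using h \<gamma> g F.gen_closed[OF g] by (simp add: xmod_hom_def F.xact_gen[symmetric])
    then show "s (h (F.gen (xact L \<gamma> g))) = xact M' \<gamma> (s (h (F.gen g)))"
      by (simp add: s_equivariant[OF \<gamma> hg[OF g]])
  qed (use s hg fs in auto)
qed

lemma free_xmod_in_PG:
  assumes "group \<Gamma>" "crossed_module \<Gamma> L"
  shows "in_PG TYPE('l) \<Gamma> (free_xmod \<Gamma> (L :: ('l, 'g) xmod))"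
proof -
  interpret F: peiffer_quotient \<Gamma> L "carrier \<Gamma> \<times> carrier (xgrp L)"
      "\<lambda>\<gamma>' (\<gamma>, g). (\<gamma>' \<otimes>\<^bsub>\<Gamma>\<^esub> \<gamma>, g)" "\<lambda>(\<gamma>, g). xact L \<gamma> g"
    by (rule peiffer_quotient_free[OF assms])
  show ?thesis
    unfolding in_PG_def using assms(2) F.crossed_module_Q xmod_retract_refl by (auto simp: free_xmod_def)
qed

lemma eq_free_xmod_in_PGe:
  assumes "group \<Gamma>" "crossed_module \<Gamma> L"
  shows "in_PGe TYPE('l) \<Gamma> (eq_free_xmod \<Gamma> (L :: ('l, 'g) xmod))"
proof -
  interpret F: peiffer_quotient \<Gamma> L "carrier (xgrp L)" "xact L" "\<lambda>g. g"
    by (rule peiffer_quotient_eq_free[OF assms])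
  show ?thesis
    unfolding in_PGe_def using assms(2) F.crossed_module_Q xmod_retract_refl by (auto simp: eq_free_xmod_def)
qed

lemma free_xmod_counit_surj:
  assumes \<Gamma>: "group \<Gamma>" and M: "crossed_module \<Gamma> M"
  shows "\<exists>f. xmod_surj \<Gamma> (free_xmod \<Gamma> M) M f"
proof -
  interpret F: peiffer_quotient \<Gamma> M "carrier \<Gamma> \<times> carrier (xgrp M)"
      "\<lambda>\<gamma>' (\<gamma>, g). (\<gamma>' \<otimes>\<^bsub>\<Gamma>\<^esub> \<gamma>, g)" "\<lambda>(\<gamma>, g). xact M \<gamma> g"
    by (rule peiffer_quotient_free[OF \<Gamma> M])
  let ?\<epsilon> = "lift_coset (eval_word (xgrp M) (\<lambda>(\<gamma>, g). xact M \<gamma> g))"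
  have "g \<in> ?\<epsilon> ` carrier (xgrp F.Q)" if g: "g \<in> carrier (xgrp M)" for g
  proof
    show "g = ?\<epsilon> (F.gen (\<one>\<^bsub>\<Gamma>\<^esub>, g))" using g F.counit(2) by (simp add: xact_one[OF M])
    show "F.gen (\<one>\<^bsub>\<Gamma>\<^esub>, g) \<in> carrier (xgrp F.Q)" using g by (simp add: F.gen_closed)
  qed
  then have "xmod_surj \<Gamma> F.Q M ?\<epsilon>"
    using F.counit(1) xmod_hom_closed[OF F.counit(1)] by (auto simp: xmod_surj_def)
  then show ?thesis by (auto simp: free_xmod_def)
qed

lemma eq_free_xmod_counit_eq_split:
  assumes \<Gamma>: "group \<Gamma>" and M: "crossed_module \<Gamma> M"
  shows "\<exists>f. xmod_eq_split \<Gamma> (eq_free_xmod \<Gamma> M) M f"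
proof -
  interpret F: peiffer_quotient \<Gamma> M "carrier (xgrp M)" "xact M" "\<lambda>g. g"
    by (rule peiffer_quotient_eq_free[OF \<Gamma> M])
  let ?\<epsilon> = "lift_coset (eval_word (xgrp M) (\<lambda>g. g))"
  have "carrier (xgrp M) \<subseteq> ?\<epsilon> ` carrier (xgrp F.Q)"
    using F.counit(2) F.gen_closed by (metis image_eqI subsetI)
  moreover have "F.gen \<in> carrier (xgrp M) \<rightarrow> carrier (xgrp F.Q)"
    using F.gen_closed by blast
  ultimately have "xmod_eq_split \<Gamma> F.Q M ?\<epsilon>"
    using F.counit xmod_hom_closed[OF F.counit(1)] F.xact_gen
    unfolding xmod_eq_split_def xmod_surj_def by (intro conjI exI[of _ F.gen]) auto
  then show ?thesis by (auto simp: eq_free_xmod_def)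
qed

section \<open>The projective classes\<close>

lemma in_PG_lifts:
  fixes \<Gamma> :: "'g monoid"
  assumes "group \<Gamma>" "in_PG TYPE('l) \<Gamma> Q" "crossed_module \<Gamma> M'" "crossed_module \<Gamma> M"
    "xmod_surj \<Gamma> M' M f"
  shows "xmod_lifts \<Gamma> Q M' M f"
proof -
  obtain L :: "('l, 'g) xmod" where L: "crossed_module \<Gamma> L" and r: "xmod_retract \<Gamma> Q (free_xmod \<Gamma> L)"
    using assms(2) unfolding in_PG_def by blast
  show ?thesis by (rule xmod_lifts_retract[OF r free_xmod_lifts[OF assms(1,3,4) L assms(5)]])
qed

lemma in_PGe_lifts:
  fixes \<Gamma> :: "'g monoid"
  assumes "group \<Gamma>" "in_PGe TYPE('l) \<Gamma> Q" "crossed_module \<Gamma> M'" "crossed_module \<Gamma> M"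
    "xmod_eq_split \<Gamma> M' M f"
  shows "xmod_lifts \<Gamma> Q M' M f"
proof -
  obtain L :: "('l, 'g) xmod" where L: "crossed_module \<Gamma> L" and r: "xmod_retract \<Gamma> Q (eq_free_xmod \<Gamma> L)"
    using assms(2) unfolding in_PGe_def by blast
  show ?thesis by (rule xmod_lifts_retract[OF r eq_free_xmod_lifts[OF assms(1,3,4) L assms(5)]])
qed

lemma in_PG_retract:
  "in_PG TYPE('l) \<Gamma> Q \<Longrightarrow> crossed_module \<Gamma> R \<Longrightarrow> xmod_retract \<Gamma> R Q \<Longrightarrow> in_PG TYPE('l) \<Gamma> R"
  unfolding in_PG_def using xmod_retract_trans by blast

lemma in_PGe_retract:
  "in_PGe TYPE('l) \<Gamma> Q \<Longrightarrow> crossed_module \<Gamma> R \<Longrightarrow> xmod_retract \<Gamma> R Q \<Longrightarrow> in_PGe TYPE('l) \<Gamma> R"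
  unfolding in_PGe_def using xmod_retract_trans by blast

theorem proposition6p2:
  fixes \<Gamma> :: "'g monoid"
  assumes "group \<Gamma>"
  shows
   \<comment> \<open>(a) lifting property of free crossed modules against surjective morphisms\<close>
   "(\<forall>(M' :: ('b, 'g) xmod) (M :: ('a, 'g) xmod) (L :: ('l, 'g) xmod) f.
       crossed_module \<Gamma> M' \<and> crossed_module \<Gamma> M \<and> crossed_module \<Gamma> L \<and>
       xmod_surj \<Gamma> M' M f \<longrightarrow> xmod_lifts \<Gamma> (free_xmod \<Gamma> L) M' M f)
    \<and> \<comment> \<open>(a) P_Gamma with surjective morphisms is a projective class\<close>
    (\<forall>(Q :: ('q, 'g) xmod) (M' :: ('b, 'g) xmod) (M :: ('a, 'g) xmod) f.
       in_PG TYPE('l) \<Gamma> Q \<and> crossed_module \<Gamma> M' \<and> crossed_module \<Gamma> M \<and>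
       xmod_surj \<Gamma> M' M f \<longrightarrow> xmod_lifts \<Gamma> Q M' M f)
    \<and> (\<forall>(Q :: ('q, 'g) xmod) (R :: ('r, 'g) xmod).
       in_PG TYPE('l) \<Gamma> Q \<and> crossed_module \<Gamma> R \<and> xmod_retract \<Gamma> R Q \<longrightarrow> in_PG TYPE('l) \<Gamma> R)
    \<and> (\<forall>M :: ('a, 'g) xmod. crossed_module \<Gamma> M \<longrightarrow>
       (\<exists>(Q :: (('g \<times> 'a) word set, 'g) xmod) f. in_PG TYPE('a) \<Gamma> Q \<and> xmod_surj \<Gamma> Q M f))
    \<and> \<comment> \<open>(b) lifting property of equivariant free crossed modules against surjections
          with an equivariant set-theoretic section\<close>
    (\<forall>(M' :: ('b, 'g) xmod) (M :: ('a, 'g) xmod) (L :: ('l, 'g) xmod) f.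
       crossed_module \<Gamma> M' \<and> crossed_module \<Gamma> M \<and> crossed_module \<Gamma> L \<and>
       xmod_eq_split \<Gamma> M' M f \<longrightarrow> xmod_lifts \<Gamma> (eq_free_xmod \<Gamma> L) M' M f)
    \<and> \<comment> \<open>(b) P_Gamma-e with such morphisms is a projective class\<close>
    (\<forall>(Q :: ('q, 'g) xmod) (M' :: ('b, 'g) xmod) (M :: ('a, 'g) xmod) f.
       in_PGe TYPE('l) \<Gamma> Q \<and> crossed_module \<Gamma> M' \<and> crossed_module \<Gamma> M \<and>
       xmod_eq_split \<Gamma> M' M f \<longrightarrow> xmod_lifts \<Gamma> Q M' M f)
    \<and> (\<forall>(Q :: ('q, 'g) xmod) (R :: ('r, 'g) xmod).
       in_PGe TYPE('l) \<Gamma> Q \<and> crossed_module \<Gamma> R \<and> xmod_retract \<Gamma> R Q \<longrightarrow> in_PGe TYPE('l) \<Gamma> R)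
    \<and> (\<forall>M :: ('a, 'g) xmod. crossed_module \<Gamma> M \<longrightarrow>
       (\<exists>(Q :: ('a word set, 'g) xmod) f. in_PGe TYPE('a) \<Gamma> Q \<and> xmod_eq_split \<Gamma> Q M f))"
  by (intro conjI allI impI; (elim conjE)?)
    (blast intro: free_xmod_lifts[OF assms] in_PG_lifts[OF assms] in_PG_retract free_xmod_in_PG[OF assms]
        eq_free_xmod_lifts[OF assms] in_PGe_lifts[OF assms] in_PGe_retract eq_free_xmod_in_PGe[OF assms]
      dest: free_xmod_counit_surj[OF assms] eq_free_xmod_counit_eq_split[OF assms])+

end
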